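(* Let $\lambda_0,\dots,\lambda_n\in\mathbb{C}$ ($n\ge1$) with $\lambda_0=\lambda_1$ real. Suppose $E_{(\lambda_0,\dots,\lambda_n)}$ is closed under complex conjugation and $0<b-a<\pi/M_n$, where $M_n:=\max\{|\mathrm{Im}\,\lambda_j|:j=0,\dots,n\}$ (no restriction if $M_n=0$). Then there exist unique nodes $a=t_0\le t_1\le\dots\le t_n=b$ and unique positive numbers $\alpha_0,\dots,\alpha_n$ such that the operator $B_{(\lambda_0,\dots,\lambda_n)}f=\sum_{k=0}^n\alpha_kf(t_k)\,p_{(\lambda_0,\dots,\lambda_n),k}$, $f\in C[a,b]$, fixes the functions $e^{\lambda_0x}$ and $xe^{\lambda_0x}$.
   Context: $E_{(\lambda_0,\dots,\lambda_n)}$ denotes the space of all $f\in C^\infty(\mathbb{R},\mathbb{C})$ with $(\frac{d}{dx}-\lambda_0)\cdots(\frac{d}{dx}-\lambda_n)f=0$ (dimension $n+1$; with $\lambda_0=\lambda_1$ it contains $e^{\lambda_0x}$ and $xe^{\lambda_0x}$); it is closed under complex conjugation if $\overline f$ lies in it whenever $f$ does. A zero of order (exactly) $k$ at $a$ means $f(a)=\dots=f^{(k-1)}(a)=0$, $f^{(k)}(a)\neq0$. Under the hypotheses the space is an extended Chebyshev system over $[a,b]$ (every nonzero element has at most $n$ zeros in $[a,b]$ with multiplicity), and its Bernstein basis $p_{(\lambda_0,\dots,\lambda_n),k}$, $k=0,\dots,n$, w.r.t. $a,b$ is the unique family in the space with a zero of order exactly $k$ at $a$, exactly $n-k$ at $b$,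 and $p^{(k)}_{(\lambda_0,\dots,\lambda_n),k}(a)=1$. *)

theory Defs
  imports "HOL-Analysis.Analysis"
begin

definition Dop :: "(real \<Rightarrow> complex) \<Rightarrow> real \<Rightarrow> complex" where
  "Dop f = (\<lambda>x. vector_derivative f (at x))"

definition smooth_fun :: "(real \<Rightarrow> complex) \<Rightarrow> bool" where
  "smooth_fun f \<longleftrightarrow> (\<forall>k x. (Dop ^^ k) f differentiable (at x))"

fun diffop :: "complex list \<Rightarrow> (real \<Rightarrow> complex) \<Rightarrow> real \<Rightarrow> complex" where
  "diffop [] f = f"
| "diffop (l # ls) f = (\<lambda>x. Dop (diffop ls f) x - l * diffop ls f x)"

definition ESpace :: "(nat \<Rightarrow> complex) \<Rightarrow> nat \<Rightarrow> (real \<Rightarrow> complex) set" where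
  "ESpace lam n = {f. smooth_fun f \<and> (\<forall>x. diffop (map lam [0..<Suc n]) f x = 0)}"

definition closed_cnj :: "(real \<Rightarrow> complex) set \<Rightarrow> bool" where
  "closed_cnj E \<longleftrightarrow> (\<forall>f\<in>E. (\<lambda>x. cnj (f x)) \<in> E)"

definition zero_order :: "(real \<Rightarrow> complex) \<Rightarrow> real \<Rightarrow> nat \<Rightarrow> bool" where
  "zero_order f a k \<longleftrightarrow> (\<forall>i<k. (Dop ^^ i) f a = 0) \<and> (Dop ^^ k) f a \<noteq> 0"

definition Mn :: "(nat \<Rightarrow> complex) \<Rightarrow> nat \<Rightarrow> real" where
  "Mn lam n = Max {\<bar>Im (lam j)\<bar> | j. j \<le> n}"

definition bernstein :: "(nat \<Rightarrow> complex) \<Rightarrow> nat \<Rightarrow> real \<Rightarrow> real \<Rightarrow> nat \<Rightarrow> real \<Rightarrow> complex" where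
  "bernstein lam n a b k = (THE p. p \<in> ESpace lam n \<and> zero_order p a k \<and> zero_order p b (n - k)
      \<and> (Dop ^^ k) p a = 1)"

definition Bop :: "(nat \<Rightarrow> complex) \<Rightarrow> nat \<Rightarrow> real \<Rightarrow> real \<Rightarrow> (nat \<Rightarrow> real) \<Rightarrow> (nat \<Rightarrow> real)
    \<Rightarrow> (real \<Rightarrow> complex) \<Rightarrow> real \<Rightarrow> complex" where
  "Bop lam n a b t \<alpha> f = (\<lambda>x. \<Sum>k\<le>n. complex_of_real (\<alpha> k) * f (t k) * bernstein lam n a b k x)"

definition good_nodes :: "(nat \<Rightarrow> complex) \<Rightarrow> nat \<Rightarrow> real \<Rightarrow> real \<Rightarrow> (nat \<Rightarrow> real) \<Rightarrow> (nat \<Rightarrow> real) \<Rightarrow> bool" where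
  "good_nodes lam n a b t \<alpha> \<longleftrightarrow>
     t 0 = a \<and> t n = b \<and> (\<forall>k<n. t k \<le> t (Suc k)) \<and> (\<forall>k\<le>n. \<alpha> k > 0) \<and>
     (\<forall>x\<in>{a..b}. Bop lam n a b t \<alpha> (\<lambda>y. exp (lam 0 * complex_of_real y)) x
                   = exp (lam 0 * complex_of_real x)) \<and>
     (\<forall>x\<in>{a..b}. Bop lam n a b t \<alpha> (\<lambda>y. complex_of_real y * exp (lam 0 * complex_of_real y)) x
                   = complex_of_real x * exp (lam 0 * complex_of_real x))"

end

theory Submission
  imports Defs
begin

(* The space E_(lambda_0,...,lambda_n) is handled through the list L of its roots:
   Esol L is the kernel of (D - l_1)...(D - l_m), and the operators D - l commute.
   (1) Calculus of smooth functions: Leibniz rule, exponentials, the first-order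
       operators D - l; Esol L is a vector space on which initial value problems
       are uniquely solvable.
   (2) Chebyshev property: if Esol L is closed under conjugation and every root
       satisfies |Im l| (b - a) < pi, a nonzero element of Esol L has fewer than
       length L zeros on [a,b] (multiplicities counted at the end points).  Induction
       on L: a real root l is removed by Rolle's theorem applied to exp(-l x) f, a
       conjugate pair m, cnj m by Rolle's theorem applied to h / w and to the Wronskian
       h' w - h w', where h = exp(-Re m x) f and w = sin(|Im m| x + gamma) > 0 on [a,b].
   (3) The Bernstein basis: existence, uniqueness, realness, positivity on (a,b),
       linear independence and spanning.
   (4) For lambda_0 = lambda_1 = mu real write exp(mu x) = sum c_k p_k and
       x exp(mu x) = sum d_k p_k.  Applying D - mu to these expansions expresses
       the basis of the smaller space E_(lambda_1,...,lambda_n) and shows c_k > 0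
       and that t_k = d_k / c_k increases strictly from t_0 = a to t_n = b.
   (5) By linear independence, the operator fixes both functions iff
       alpha_k exp(mu t_k) = c_k and alpha_k t_k exp(mu t_k) = d_k, which gives
       existence and uniqueness of the nodes and weights. *)

section \<open>Smooth functions and their derivatives\<close>

lemma Dop_at: "(f has_vector_derivative d) (at x) \<Longrightarrow> Dop f x = d"
  by (simp add: Dop_def vector_derivative_at)

lemma Dop_works: "f differentiable (at x) \<Longrightarrow> (f has_vector_derivative Dop f x) (at x)"
  by (simp add: Dop_def vector_derivative_works[symmetric])

lemma funpow_Dop_Suc: "(Dop ^^ Suc k) f = (Dop ^^ k) (Dop f)"
  by (simp add: funpow_swap1)

lemma smooth_diff: "smooth_fun f \<Longrightarrow> f differentiable (at x)"
  unfolding smooth_fun_def by (metis funpow_0)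

lemma smooth_Dop: "smooth_fun f \<Longrightarrow> smooth_fun (Dop f)"
  unfolding smooth_fun_def by (metis funpow_Dop_Suc)

lemma smooth_Dk: "smooth_fun f \<Longrightarrow> smooth_fun ((Dop ^^ k) f)"
  unfolding smooth_fun_def by (metis funpow_add comp_apply)

lemma smooth_Dk_diff: "smooth_fun f \<Longrightarrow> (Dop ^^ k) f differentiable (at x)"
  unfolding smooth_fun_def by blast

lemma smooth_Dk_hasder: "smooth_fun f \<Longrightarrow> ((Dop ^^ k) f has_vector_derivative (Dop ^^ Suc k) f x) (at x)"
  using Dop_works[OF smooth_Dk_diff] by simp

lemma smooth_cont: "smooth_fun f \<Longrightarrow> continuous_on S f"
  by (meson continuous_at_imp_continuous_on differentiable_imp_continuous_within smooth_diff)

lemma Dop_add: "f differentiable (at x) \<Longrightarrow> g differentiable (at x) \<Longrightarrow>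
   Dop (\<lambda>x. f x + g x) x = Dop f x + Dop g x"
  by (intro Dop_at derivative_intros Dop_works)

lemma Dop_diff: "f differentiable (at x) \<Longrightarrow> g differentiable (at x) \<Longrightarrow>
   Dop (\<lambda>x. f x - g x) x = Dop f x - Dop g x"
  by (intro Dop_at derivative_intros Dop_works)

lemma Dop_cmult: "f differentiable (at x) \<Longrightarrow> Dop (\<lambda>x. c * f x) x = c * Dop f x"
  by (intro Dop_at derivative_intros Dop_works)

lemma Dop_sum: "finite I \<Longrightarrow> (\<And>i. i \<in> I \<Longrightarrow> h i differentiable (at x)) \<Longrightarrow>
   Dop (\<lambda>x. \<Sum>i\<in>I. h i x) x = (\<Sum>i\<in>I. Dop (h i) x)"
  by (intro Dop_at has_vector_derivative_sum Dop_works) auto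

lemma Dop_const_fun: "Dop (\<lambda>x. c) = (\<lambda>x. 0)"
  by (intro ext Dop_at derivative_intros)

lemma Dk_const: "(Dop ^^ Suc k) (\<lambda>x. c) = (\<lambda>x. 0)"
proof (induction k arbitrary: c)
  case 0 then show ?case by (simp add: Dop_const_fun)
next
  case (Suc k) then show ?case by (simp only: funpow_Dop_Suc[of "Suc k"] Dop_const_fun)
qed

lemma Dk_zero: "(Dop ^^ j) (\<lambda>x. 0) = (\<lambda>x. 0)"
  by (cases j) (simp, simp only: Dk_const)

lemma smooth_const: "smooth_fun (\<lambda>x. c)"
  unfolding smooth_fun_def
proof (intro allI)
  fix k x show "(Dop ^^ k) (\<lambda>x. c) differentiable at x"
    by (cases k) (auto simp: Dk_const simp del: funpow.simps)
qed

lemma Dk_add: "smooth_fun f \<Longrightarrow> smooth_fun g \<Longrightarrow>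
   (Dop ^^ k) (\<lambda>x. f x + g x) = (\<lambda>x. (Dop ^^ k) f x + (Dop ^^ k) g x)"
proof (induction k arbitrary: f g)
  case (Suc k)
  have "Dop (\<lambda>x. f x + g x) = (\<lambda>x. Dop f x + Dop g x)"
    using Suc.prems by (auto simp: fun_eq_iff Dop_add smooth_diff)
  then show ?case using Suc smooth_Dop by (simp only: funpow_Dop_Suc)
qed simp

lemma smooth_add: "smooth_fun f \<Longrightarrow> smooth_fun g \<Longrightarrow> smooth_fun (\<lambda>x. f x + g x)"
  unfolding smooth_fun_def[of "\<lambda>x. f x + g x"]
  by (simp add: Dk_add smooth_Dk_diff differentiable_add)

lemma Dk_cmult: "smooth_fun f \<Longrightarrow> (Dop ^^ k) (\<lambda>x. c * f x) = (\<lambda>x. c * (Dop ^^ k) f x)"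
proof (induction k arbitrary: f)
  case (Suc k)
  have "Dop (\<lambda>x. c * f x) = (\<lambda>x. c * Dop f x)"
    using Suc.prems by (auto simp: fun_eq_iff Dop_cmult smooth_diff)
  then show ?case using Suc smooth_Dop by (simp only: funpow_Dop_Suc)
qed simp

lemma smooth_cmult: "smooth_fun f \<Longrightarrow> smooth_fun (\<lambda>x. c * f x)"
  unfolding smooth_fun_def[of "\<lambda>x. c * f x"]
  by (simp add: Dk_cmult smooth_Dk_diff differentiable_mult differentiable_const)

lemma smooth_diff_fun: "smooth_fun f \<Longrightarrow> smooth_fun g \<Longrightarrow> smooth_fun (\<lambda>x. f x - g x)"
  using smooth_add[of f "\<lambda>x. (-1) * g x"] smooth_cmult[of g "-1"] by simp

lemma Dk_diff: "smooth_fun f \<Longrightarrow> smooth_fun g \<Longrightarrow>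
   (Dop ^^ k) (\<lambda>x. f x - g x) = (\<lambda>x. (Dop ^^ k) f x - (Dop ^^ k) g x)"
  using Dk_add[of f "\<lambda>x. (-1) * g x" k] smooth_cmult[of g "-1"] Dk_cmult[of g k "-1"] by simp

lemma smooth_sum: "finite I \<Longrightarrow> (\<And>i. i \<in> I \<Longrightarrow> smooth_fun (f i)) \<Longrightarrow> smooth_fun (\<lambda>x. \<Sum>i\<in>I. f i x)"
  by (induction I rule: finite_induct) (auto simp: smooth_const smooth_add)

lemma Dk_sum: "finite I \<Longrightarrow> (\<And>i. i \<in> I \<Longrightarrow> smooth_fun (f i)) \<Longrightarrow>
   (Dop ^^ k) (\<lambda>x. \<Sum>i\<in>I. f i x) = (\<lambda>x. \<Sum>i\<in>I. (Dop ^^ k) (f i) x)"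
proof (induction I rule: finite_induct)
  case empty then show ?case by (simp add: Dk_zero)
next
  case (insert j I)
  then show ?case by (simp add: Dk_add smooth_sum)
qed

lemma Dk_lincomb:
  assumes "finite I" "\<And>k. k \<in> I \<Longrightarrow> smooth_fun (p k)"
  shows "(Dop ^^ i) (\<lambda>x. \<Sum>k\<in>I. c k * p k x) = (\<lambda>x. \<Sum>k\<in>I. c k * (Dop ^^ i) (p k) x)"
  using assms by (simp add: Dk_sum smooth_cmult Dk_cmult)

lemma smooth_lincomb:
  assumes "finite I" "\<And>k. k \<in> I \<Longrightarrow> smooth_fun (p k)"
  shows "smooth_fun (\<lambda>x. \<Sum>k\<in>I. c k * p k x)"
  using assms by (intro smooth_sum smooth_cmult) auto

lemma Suc_choose_split: "Suc n choose k = (n choose k) + (if k = 0 then 0 else (n choose (k-1)))"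
  by (cases k) simp_all

lemma leibniz_sum_step:
  fixes F G :: "nat \<Rightarrow> complex"
  shows "(\<Sum>i\<le>k. of_nat (k choose i) * (F i * G (Suc (k - i)) + F (Suc i) * G (k - i)))
       = (\<Sum>i\<le>Suc k. of_nat (Suc k choose i) * F i * G (Suc k - i))"
proof -
  have A: "(\<Sum>i\<le>Suc k. of_nat (k choose i) * F i * G (Suc k - i))
        = (\<Sum>i\<le>k. of_nat (k choose i) * F i * G (Suc (k - i)))"
    by (simp add: Suc_diff_le)
  have B: "(\<Sum>i\<le>Suc k. of_nat (if i = 0 then 0 else (k choose (i-1))) * F i * G (Suc k - i))
        = (\<Sum>i\<le>k. of_nat (k choose i) * F (Suc i) * G (k - i))"
    by (subst sum.atMost_Suc_shift) simp
  have "(\<Sum>i\<le>Suc k. of_nat (Suc k choose i) * F i * G (Suc k - i))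
      = (\<Sum>i\<le>Suc k. of_nat (k choose i) * F i * G (Suc k - i))
        + (\<Sum>i\<le>Suc k. of_nat (if i = 0 then 0 else (k choose (i-1))) * F i * G (Suc k - i))"
    by (simp add: Suc_choose_split sum.distrib[symmetric] algebra_simps del: binomial_Suc_Suc)
  also have "\<dots> = (\<Sum>i\<le>k. of_nat (k choose i) * (F i * G (Suc (k - i)) + F (Suc i) * G (k - i)))"
    unfolding A B by (simp add: sum.distrib[symmetric] algebra_simps)
  finally show ?thesis by simp
qed

lemma leibniz:
  assumes f: "smooth_fun f" and g: "smooth_fun g"
  shows "(Dop ^^ k) (\<lambda>x. f x * g x) = (\<lambda>x. \<Sum>i\<le>k. of_nat (k choose i) * (Dop ^^ i) f x * (Dop ^^ (k - i)) g x)"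
proof (induction k)
  case 0 then show ?case by simp
next
  case (Suc k)
  have "(Dop ^^ Suc k) (\<lambda>x. f x * g x) = Dop ((Dop ^^ k) (\<lambda>x. f x * g x))" by simp
  also have "\<dots> = Dop (\<lambda>x. \<Sum>i\<le>k. of_nat (k choose i) * (Dop ^^ i) f x * (Dop ^^ (k - i)) g x)"
    using Suc by simp
  also have "\<dots> = (\<lambda>x. \<Sum>i\<le>Suc k. of_nat (Suc k choose i) * (Dop ^^ i) f x * (Dop ^^ (Suc k - i)) g x)"
  proof
    fix x
    have d: "\<And>i j. (\<lambda>x. of_nat (k choose i) * (Dop ^^ i) f x * (Dop ^^ j) g x) differentiable (at x)"
      using f g by (intro differentiable_mult differentiable_const smooth_Dk_diff)
    have e: "\<And>i j. Dop (\<lambda>x. of_nat (k choose i) * (Dop ^^ i) f x * (Dop ^^ j) g x) x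
        = of_nat (k choose i) * ((Dop ^^ i) f x * (Dop ^^ Suc j) g x + (Dop ^^ Suc i) f x * (Dop ^^ j) g x)"
      using f g by (intro Dop_at) (auto intro!: derivative_eq_intros smooth_Dk_hasder simp: algebra_simps)
    have "Dop (\<lambda>x. \<Sum>i\<le>k. of_nat (k choose i) * (Dop ^^ i) f x * (Dop ^^ (k - i)) g x) x
       = (\<Sum>i\<le>k. of_nat (k choose i) * ((Dop ^^ i) f x * (Dop ^^ Suc (k - i)) g x + (Dop ^^ Suc i) f x * (Dop ^^ (k - i)) g x))"
      by (subst Dop_sum) (auto simp: d e)
    also have "\<dots> = (\<Sum>i\<le>Suc k. of_nat (Suc k choose i) * (Dop ^^ i) f x * (Dop ^^ (Suc k - i)) g x)"
      using leibniz_sum_step[of k "\<lambda>i. (Dop ^^ i) f x" "\<lambda>i. (Dop ^^ i) g x"] by simp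
    finally show "Dop (\<lambda>x. \<Sum>i\<le>k. of_nat (k choose i) * (Dop ^^ i) f x * (Dop ^^ (k - i)) g x) x = 
      (\<Sum>i\<le>Suc k. of_nat (Suc k choose i) * (Dop ^^ i) f x * (Dop ^^ (Suc k - i)) g x)" .
  qed
  finally show ?case .
qed

lemma smooth_mult: "smooth_fun f \<Longrightarrow> smooth_fun g \<Longrightarrow> smooth_fun (\<lambda>x. f x * g x)"
  unfolding smooth_fun_def[of "\<lambda>x. f x * g x"]
  by (simp add: leibniz del: funpow.simps)
     (intro allI differentiable_sum ballI differentiable_mult differentiable_const smooth_Dk_diff; simp)

definition flat :: "(real \<Rightarrow> complex) \<Rightarrow> real \<Rightarrow> nat \<Rightarrow> bool" where
  "flat f a i \<longleftrightarrow> (\<forall>l<i. (Dop ^^ l) f a = 0)"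

lemma flat_mono: "flat f a i \<Longrightarrow> i' \<le> i \<Longrightarrow> flat f a i'"
  by (simp add: flat_def)

lemma flat_imp_zero: "flat f a k \<Longrightarrow> 0 < k \<Longrightarrow> f a = 0"
  unfolding flat_def by (metis funpow_0)

lemma flat_Dop: "flat f a i \<Longrightarrow> flat (Dop f) a (i - 1)"
  by (simp add: flat_def funpow_Dop_Suc[symmetric] del: funpow.simps)

lemma flat_diff: "smooth_fun f \<Longrightarrow> smooth_fun g \<Longrightarrow> flat f a i \<Longrightarrow> flat g a i \<Longrightarrow> flat (\<lambda>x. f x - g x) a i"
  unfolding flat_def by (simp add: Dk_diff)

lemma flat_uminus: "smooth_fun f \<Longrightarrow> flat f a i \<Longrightarrow> flat (\<lambda>x. - f x) a i"
  using Dk_cmult[of f _ "-1"] unfolding flat_def by simp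

lemma flat_lincomb:
  assumes "finite I" "\<And>k. k \<in> I \<Longrightarrow> smooth_fun (p k)" "\<And>k. k \<in> I \<Longrightarrow> flat (p k) a i"
  shows "flat (\<lambda>x. \<Sum>k\<in>I. c k * p k x) a i"
  using assms unfolding flat_def by (simp add: Dk_lincomb)

lemma flat_mult:
  assumes "smooth_fun w" "smooth_fun f" "flat f a i"
  shows "flat (\<lambda>x. w x * f x) a i"
  unfolding flat_def
proof (intro allI impI)
  fix l assume l: "l < i"
  have "(Dop ^^ l) (\<lambda>x. w x * f x) a = (\<Sum>j\<le>l. of_nat (l choose j) * (Dop ^^ j) w a * (Dop ^^ (l - j)) f a)"
    using assms by (simp add: leibniz)
  also have "\<dots> = 0" using assms(3) l by (intro sum.neutral) (auto simp: flat_def)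
  finally show "(Dop ^^ l) (\<lambda>x. w x * f x) a = 0" .
qed

lemma flat_mult_right: "smooth_fun w \<Longrightarrow> smooth_fun f \<Longrightarrow> flat f a i \<Longrightarrow> flat (\<lambda>x. f x * w x) a i"
  using flat_mult[of w f a i] by (simp add: mult.commute)

lemma flat_div:
  assumes "smooth_fun w" "smooth_fun f" "w a \<noteq> 0" "flat (\<lambda>x. w x * f x) a i"
  shows "flat f a i"
proof -
  have "(Dop ^^ l) f a = 0" if "l < i" for l
    using that
  proof (induction l rule: less_induct)
    case (less l)
    have "0 = (Dop ^^ l) (\<lambda>x. w x * f x) a" using assms(4) less by (simp add: flat_def)
    also have "\<dots> = (\<Sum>j\<le>l. of_nat (l choose j) * (Dop ^^ j) w a * (Dop ^^ (l - j)) f a)"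
      using assms by (simp add: leibniz)
    also have "\<dots> = w a * (Dop ^^ l) f a"
      using less.prems by (subst sum.atMost_shift) (auto intro!: sum.neutral less.IH)
    finally show ?case using assms(3) by simp
  qed
  then show ?thesis by (simp add: flat_def)
qed

section \<open>Exponentials\<close>

definition expf :: "complex \<Rightarrow> real \<Rightarrow> complex" where
  "expf c = (\<lambda>x. exp (c * of_real x))"

lemma expf_hasder: "(expf c has_vector_derivative c * expf c x) (at x)"
  unfolding expf_def
  by (auto intro!: derivative_eq_intros has_vector_derivative_real_field simp: algebra_simps)

lemma Dop_expf: "Dop (expf c) = (\<lambda>x. c * expf c x)"
  using expf_hasder Dop_at by blast

lemma Dk_expf: "(Dop ^^ k) (expf c) = (\<lambda>x. c ^ k * expf c x)"
proof (induction k)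
  case 0 then show ?case by simp
next
  case (Suc k)
  have "Dop (\<lambda>x. c ^ k * expf c x) = (\<lambda>x. c ^ k * (c * expf c x))"
    by (intro ext Dop_at derivative_intros expf_hasder)
  then show ?case using Suc by (simp add: algebra_simps)
qed

lemma expf_diff: "expf c differentiable (at x)"
  using expf_hasder by (rule differentiableI_vector)

lemma smooth_expf: "smooth_fun (expf c)"
  unfolding smooth_fun_def Dk_expf
  by (intro allI differentiable_mult differentiable_const expf_diff)

lemma expf_nonzero: "expf c x \<noteq> 0" by (simp add: expf_def)

lemma expf_add: "expf c x * expf d x = expf (c + d) x"
  by (simp add: expf_def exp_add[symmetric] algebra_simps)

lemma expf_0: "expf 0 x = 1" by (simp add: expf_def)

lemma expf_neg: "expf (-c) x * expf c x = 1"
  by (simp add: expf_add expf_0)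

lemma expf_real: assumes "Im c = 0" shows "expf c x = of_real (exp (Re c * x))"
proof -
  have "c = of_real (Re c)" using assms by (simp add: complex_eq_iff)
  then have "c * of_real x = of_real (Re c * x)" by (metis of_real_mult)
  then have "expf c x = exp (of_real (Re c * x))" unfolding expf_def by (simp only:)
  also have "\<dots> = of_real (exp (Re c * x))" by (rule exp_of_real)
  finally show ?thesis .
qed

lemma idf_hasder: "((\<lambda>x. complex_of_real x) has_vector_derivative 1) (at x)"
  by (auto intro!: derivative_eq_intros)

lemma Dop_idf: "Dop (\<lambda>x. complex_of_real x) = (\<lambda>x. 1)"
  using idf_hasder Dop_at by blast

lemma smooth_idf: "smooth_fun (\<lambda>x. complex_of_real x)"
  unfolding smooth_fun_def
proof (intro allI)
  fix k x
  show "(Dop ^^ k) (\<lambda>x. complex_of_real x) differentiable at x"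
  proof (cases k)
    case 0 then show ?thesis using idf_hasder by (auto simp: differentiable_def has_vector_derivative_def)
  next
    case (Suc m)
    then have "(Dop ^^ k) (\<lambda>x. complex_of_real x) = (Dop ^^ m) (\<lambda>x. 1)"
      by (simp only: funpow_Dop_Suc Dop_idf)
    then show ?thesis using smooth_const smooth_Dk_diff by metis
  qed
qed

lemma Dop_cnj: "f differentiable (at x) \<Longrightarrow> Dop (\<lambda>x. cnj (f x)) x = cnj (Dop f x)"
  by (intro Dop_at has_vector_derivative_cnj Dop_works)

lemma Dk_cnj: "smooth_fun f \<Longrightarrow> (Dop ^^ k) (\<lambda>x. cnj (f x)) = (\<lambda>x. cnj ((Dop ^^ k) f x))"
proof (induction k arbitrary: f)
  case (Suc k)
  have "Dop (\<lambda>x. cnj (f x)) = (\<lambda>x. cnj (Dop f x))"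
    using Suc.prems by (auto simp: fun_eq_iff Dop_cnj smooth_diff)
  then show ?case using Suc smooth_Dop by (simp only: funpow_Dop_Suc)
qed simp

lemma smooth_cnj: assumes "smooth_fun f" shows "smooth_fun (\<lambda>x. cnj (f x))"
  unfolding smooth_fun_def Dk_cnj[OF assms]
  using has_vector_derivative_cnj[OF Dop_works[OF smooth_Dk_diff[OF assms]]]
  by (blast intro: differentiableI_vector)

definition real_valued :: "(real \<Rightarrow> complex) \<Rightarrow> bool" where
  "real_valued f \<longleftrightarrow> (\<forall>x. Im (f x) = 0)"

lemma real_valued_cnj: "real_valued f \<longleftrightarrow> (\<lambda>x. cnj (f x)) = f"
  unfolding real_valued_def by (auto simp: fun_eq_iff complex_eq_iff)

lemma real_valued_Dk: assumes "smooth_fun f" "real_valued f" shows "real_valued ((Dop ^^ k) f)"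
proof -
  have e: "(\<lambda>x. cnj (f x)) = f" using assms(2) real_valued_cnj by blast
  have "(Dop ^^ k) (\<lambda>x. cnj (f x)) = (\<lambda>x. cnj ((Dop ^^ k) f x))" using Dk_cnj[OF assms(1)] .
  then have "(Dop ^^ k) f = (\<lambda>x. cnj ((Dop ^^ k) f x))" unfolding e .
  then show ?thesis using real_valued_cnj by metis
qed

lemma real_valued_Dop: "smooth_fun f \<Longrightarrow> real_valued f \<Longrightarrow> real_valued (Dop f)"
  using real_valued_Dk[of f 1] by simp

lemma real_valued_deriv: "f differentiable (at x) \<Longrightarrow>
  ((\<lambda>x. Re (f x)) has_real_derivative Re (Dop f x)) (at x)"
  unfolding has_real_derivative_iff_has_vector_derivative
  by (rule bounded_linear.has_vector_derivative[OF bounded_linear_Re Dop_works])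

lemma real_valued_mult: "real_valued f \<Longrightarrow> real_valued g \<Longrightarrow> real_valued (\<lambda>x. f x * g x)"
  by (simp add: real_valued_def)
lemma real_valued_add: "real_valued f \<Longrightarrow> real_valued g \<Longrightarrow> real_valued (\<lambda>x. f x + g x)"
  by (simp add: real_valued_def)
lemma real_valued_diff: "real_valued f \<Longrightarrow> real_valued g \<Longrightarrow> real_valued (\<lambda>x. f x - g x)"
  by (simp add: real_valued_def)
lemma real_valued_cmult: "Im c = 0 \<Longrightarrow> real_valued f \<Longrightarrow> real_valued (\<lambda>x. c * f x)"
  by (simp add: real_valued_def)
lemma real_valued_expf: "Im c = 0 \<Longrightarrow> real_valued (expf c)"
  by (simp add: real_valued_def expf_real)
lemma real_valued_ofreal: "real_valued (\<lambda>x. of_real (g x))"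
  by (simp add: real_valued_def)

text \<open>A smooth function vanishing on a nondegenerate interval has all derivatives
  vanishing there (by continuity of the derivative up to the end points).\<close>

lemma zero_on_Dop:
  assumes "smooth_fun g" "a < b" "\<forall>x\<in>{a..b}. g x = 0"
  shows "\<forall>x\<in>{a..b}. Dop g x = 0"
proof -
  have int: "Dop g x = 0" if "x \<in> {a<..<b}" for x
  proof -
    have "((\<lambda>x. 0) has_vector_derivative 0) (at x)" by (rule derivative_intros)
    then have "(g has_vector_derivative 0) (at x)"
      by (rule has_vector_derivative_transform_within_open[of _ _ _ "{a<..<b}"]) (use that assms in auto)
    then show ?thesis by (rule Dop_at)
  qed
  have "continuous_on (closure {a<..<b}) (Dop g)"
    using smooth_cont[OF smooth_Dop[OF assms(1)]] by blast
  then show ?thesis using continuous_constant_on_closure[of "{a<..<b}" "Dop g" 0] int assms(2)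
    by auto
qed

lemma zero_on_Dk:
  assumes "smooth_fun g" "a < b" "\<forall>x\<in>{a..b}. g x = 0"
  shows "\<forall>x\<in>{a..b}. (Dop ^^ k) g x = 0"
proof (induction k)
  case 0 then show ?case using assms by simp
next
  case (Suc k) then show ?case using zero_on_Dop[OF smooth_Dk[OF assms(1)] assms(2)] by simp
qed

section \<open>The operators \<open>D - l\<close> and the solution spaces\<close>

text \<open>\<open>Dminus l f = f' - l f\<close>.  The operator \<open>diffop\<close> of the definitions is a composition
  of such operators; they commute, so the order of the roots is irrelevant.\<close>

definition Dminus :: "complex \<Rightarrow> (real \<Rightarrow> complex) \<Rightarrow> real \<Rightarrow> complex" where
  "Dminus l f = (\<lambda>x. Dop f x - l * f x)"

lemma smooth_Dminus: "smooth_fun f \<Longrightarrow> smooth_fun (Dminus l f)"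
  unfolding Dminus_def by (intro smooth_diff_fun smooth_Dop smooth_cmult)

lemma smooth_diffop: "smooth_fun f \<Longrightarrow> smooth_fun (diffop ls f)"
  by (induction ls) (auto intro: smooth_Dminus[unfolded Dminus_def])

lemma diffop_Cons_Dminus: "diffop (l # ls) f = Dminus l (diffop ls f)"
  by (simp add: Dminus_def)

declare diffop.simps(2)[simp del]

lemma Dk_Dminus: "smooth_fun f \<Longrightarrow> (Dop ^^ k) (Dminus l f) = (\<lambda>x. (Dop ^^ Suc k) f x - l * (Dop ^^ k) f x)"
  unfolding Dminus_def by (simp add: Dk_diff smooth_Dop smooth_cmult Dk_cmult funpow_Dop_Suc del: funpow.simps)

lemma Dminus_Dminus: assumes "smooth_fun f"
  shows "Dminus l (Dminus m f) = (\<lambda>x. Dop (Dop f) x - (l + m) * Dop f x + l * m * f x)"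
proof
  fix x
  have d1: "Dop f differentiable (at x)" using smooth_diff[OF smooth_Dop[OF assms]] .
  have d2: "f differentiable (at x)" using smooth_diff[OF assms] .
  have d3: "(\<lambda>x. m * f x) differentiable (at x)" using d2 by (intro differentiable_mult differentiable_const)
  have "Dop (\<lambda>x. Dop f x - m * f x) x = Dop (Dop f) x - m * Dop f x"
    using Dop_diff[OF d1 d3] Dop_cmult[OF d2] by simp
  then show "Dminus l (Dminus m f) x = Dop (Dop f) x - (l + m) * Dop f x + l * m * f x"
    unfolding Dminus_def by (simp add: algebra_simps)
qed

lemma Dminus_lincomb:
  assumes "finite I" "\<And>k. k \<in> I \<Longrightarrow> smooth_fun (p k)"
  shows "Dminus l (\<lambda>x. \<Sum>k\<in>I. c k * p k x) = (\<lambda>x. \<Sum>k\<in>I. c k * Dminus l (p k) x)"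
proof -
  have "Dop (\<lambda>x. \<Sum>k\<in>I. c k * p k x) = (\<lambda>x. \<Sum>k\<in>I. c k * Dop (p k) x)"
    using Dk_lincomb[OF assms, where i=1 and c=c] by simp
  then show ?thesis by (simp add: Dminus_def sum_subtractf algebra_simps sum_distrib_left)
qed

lemma flat_Dminus: "smooth_fun f \<Longrightarrow> flat f a i \<Longrightarrow> flat (Dminus l f) a (i - 1)"
  unfolding flat_def by (simp add: Dk_Dminus del: funpow.simps)

lemma Dminus_comm: "smooth_fun f \<Longrightarrow> Dminus l (Dminus m f) = Dminus m (Dminus l f)"
  by (simp add: Dminus_Dminus algebra_simps)

lemma Dminus_diffop: "smooth_fun f \<Longrightarrow> diffop ls (Dminus l f) = Dminus l (diffop ls f)"
proof (induction ls)
  case Nil then show ?case by simp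
next
  case (Cons m ls)
  then show ?case by (simp add: diffop_Cons_Dminus Dminus_comm smooth_diffop)
qed

lemma diffop_Cons': "smooth_fun f \<Longrightarrow> diffop (l # ls) f = diffop ls (Dminus l f)"
  by (simp add: diffop_Cons_Dminus Dminus_diffop)

lemma diffop_remove1: "l \<in> set ys \<Longrightarrow> smooth_fun f \<Longrightarrow> diffop ys f = diffop (remove1 l ys) (Dminus l f)"
proof (induction ys)
  case Nil then show ?case by simp
next
  case (Cons m ys)
  show ?case
  proof (cases "m = l")
    case True then show ?thesis using Cons by (simp add: diffop_Cons')
  next
    case False
    then have "l \<in> set ys" using Cons by simp
    then show ?thesis using Cons False by (simp add: diffop_Cons_Dminus Dminus_diffop)
  qed
qed

lemma diffop_zero: "diffop ls (\<lambda>x. 0) = (\<lambda>x. 0)"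
  by (induction ls) (auto simp: diffop_Cons_Dminus Dminus_def Dop_const_fun)

lemma diffop_add: "smooth_fun f \<Longrightarrow> smooth_fun g \<Longrightarrow> diffop ls (\<lambda>x. f x + g x) = (\<lambda>x. diffop ls f x + diffop ls g x)"
proof (induction ls)
  case Nil then show ?case by simp
next
  case (Cons l ls)
  have IH: "diffop ls (\<lambda>x. f x + g x) = (\<lambda>x. diffop ls f x + diffop ls g x)" using Cons by simp
  show ?case unfolding diffop_Cons_Dminus IH Dminus_def
    using Cons.prems by (intro ext) (simp add: Dop_add smooth_diff smooth_diffop algebra_simps)
qed

lemma diffop_cmult: "smooth_fun f \<Longrightarrow> diffop ls (\<lambda>x. c * f x) = (\<lambda>x. c * diffop ls f x)"
proof (induction ls)
  case Nil then show ?case by simp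
next
  case (Cons l ls)
  have IH: "diffop ls (\<lambda>x. c * f x) = (\<lambda>x. c * diffop ls f x)" using Cons by simp
  show ?case unfolding diffop_Cons_Dminus IH Dminus_def
    using Cons.prems by (intro ext) (simp add: Dop_cmult smooth_diff smooth_diffop algebra_simps)
qed

definition Esol :: "complex list \<Rightarrow> (real \<Rightarrow> complex) set" where
  "Esol L = {f. smooth_fun f \<and> (\<forall>x. diffop L f x = 0)}"

lemma ESpace_Esol: "ESpace lam n = Esol (map lam [0..<Suc n])"
  by (simp add: ESpace_def Esol_def)

lemma Esol_smooth: "f \<in> Esol L \<Longrightarrow> smooth_fun f"
  by (simp add: Esol_def)

lemma Esol_remove1: "l \<in> set L \<Longrightarrow> f \<in> Esol L \<longleftrightarrow> smooth_fun f \<and> Dminus l f \<in> Esol (remove1 l L)"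
  unfolding Esol_def using diffop_remove1 smooth_Dminus by auto

lemma Esol_Cons: "f \<in> Esol (l # L) \<longleftrightarrow> smooth_fun f \<and> Dminus l f \<in> Esol L"
  using Esol_remove1[of l "l # L"] by simp

lemma Esol_zero: "(\<lambda>x. 0) \<in> Esol L"
  by (simp add: Esol_def diffop_zero smooth_const)

lemma Esol_add: "f \<in> Esol L \<Longrightarrow> g \<in> Esol L \<Longrightarrow> (\<lambda>x. f x + g x) \<in> Esol L"
  by (simp add: Esol_def diffop_add smooth_add)

lemma Esol_cmult: "f \<in> Esol L \<Longrightarrow> (\<lambda>x. c * f x) \<in> Esol L"
  by (simp add: Esol_def diffop_cmult smooth_cmult)

lemma Esol_diff: "f \<in> Esol L \<Longrightarrow> g \<in> Esol L \<Longrightarrow> (\<lambda>x. f x - g x) \<in> Esol L"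
  using Esol_add[of f L "\<lambda>x. (-1) * g x"] Esol_cmult[of g L "-1"] by simp

lemma Esol_sum: "finite I \<Longrightarrow> (\<And>i. i \<in> I \<Longrightarrow> f i \<in> Esol L) \<Longrightarrow> (\<lambda>x. \<Sum>i\<in>I. f i x) \<in> Esol L"
  by (induction I rule: finite_induct) (auto simp: Esol_zero Esol_add)

lemma Esol_lincomb:
  assumes "finite I" "\<And>k. k \<in> I \<Longrightarrow> p k \<in> Esol L"
  shows "(\<lambda>x. \<Sum>k\<in>I. c k * p k x) \<in> Esol L"
  using assms by (intro Esol_sum Esol_cmult) auto

lemma Esol_Nil: "f \<in> Esol [] \<longleftrightarrow> f = (\<lambda>x. 0)"
proof
  assume "f \<in> Esol []" then show "f = (\<lambda>x. 0)" by (auto simp: Esol_def fun_eq_iff)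
next
  assume "f = (\<lambda>x. 0)" then show "f \<in> Esol []" by (simp add: Esol_zero)
qed

lemma Dminus_expf: "Dminus l (expf c) = (\<lambda>x. (c - l) * expf c x)"
  by (simp add: Dminus_def Dop_expf algebra_simps)

lemma diffop_expf: "diffop ls (expf c) = (\<lambda>x. (\<Prod>l\<leftarrow>ls. c - l) * expf c x)"
proof (induction ls)
  case Nil then show ?case by simp
next
  case (Cons l ls)
  have "Dop (\<lambda>x. (\<Prod>l\<leftarrow>ls. c - l) * expf c x) = (\<lambda>x. (\<Prod>l\<leftarrow>ls. c - l) * (c * expf c x))"
    by (intro ext Dop_at derivative_intros expf_hasder)
  then show ?case unfolding diffop_Cons_Dminus Cons Dminus_def by (simp add: algebra_simps)
qed

lemma expf_in_Esol: "l \<in> set L \<Longrightarrow> expf l \<in> Esol L"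
  by (simp add: Esol_remove1 smooth_expf Dminus_expf Esol_zero)

lemma expf_in_Esol_iff: "expf c \<in> Esol L \<longleftrightarrow> c \<in> set L"
proof
  assume "expf c \<in> Esol L"
  then have "diffop L (expf c) 0 = 0" by (simp add: Esol_def)
  then have "(\<Prod>l\<leftarrow>L. c - l) * expf c 0 = 0" by (simp only: diffop_expf)
  then have "(\<Prod>l\<leftarrow>L. c - l) = 0" by (simp add: expf_nonzero)
  then show "c \<in> set L" by (auto simp: prod_list_zero_iff)
qed (rule expf_in_Esol)

definition xexpf :: "complex \<Rightarrow> real \<Rightarrow> complex" where
  "xexpf c = (\<lambda>x. of_real x * expf c x)"

lemma smooth_xexpf: "smooth_fun (xexpf c)"
  unfolding xexpf_def by (intro smooth_mult smooth_idf smooth_expf)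

lemma Dminus_xexpf: "Dminus c (xexpf c) = expf c"
proof -
  have "Dop (xexpf c) x = expf c x + of_real x * (c * expf c x)" for x
    unfolding xexpf_def by (intro Dop_at) (auto intro!: derivative_eq_intros expf_hasder simp: algebra_simps)
  then show ?thesis by (simp add: Dminus_def fun_eq_iff xexpf_def algebra_simps)
qed

lemma xexpf_in_Esol: "L = c # c # L' \<Longrightarrow> xexpf c \<in> Esol L"
  using Esol_Cons[of "xexpf c" c "c # L'"] expf_in_Esol[of c "c # L'"] by (simp add: smooth_xexpf Dminus_xexpf)

section \<open>Initial value problems in the solution spaces\<close>

lemma antideriv:
  fixes g :: "real \<Rightarrow> complex"
  assumes "\<And>x. isCont g x"
  shows "\<exists>F. \<forall>x. (F has_vector_derivative g x) (at x)"
  using einterval_antiderivative[of "-\<infinity>" "\<infinity>" g] assms by auto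

lemma zero_deriv_const:
  assumes "\<And>x. (h has_vector_derivative 0) (at x)"
  shows "h x = h y"
proof -
  have "\<exists>c. \<forall>x\<in>UNIV. h x = c"
    by (rule has_derivative_zero_constant) (use assms in \<open>auto simp: has_vector_derivative_def\<close>)
  then show ?thesis by auto
qed

lemma expf_mult_Dminus:
  assumes "smooth_fun f"
  shows "((\<lambda>x. expf (-l) x * f x) has_vector_derivative expf (-l) x * Dminus l f x) (at x)"
proof -
  have "((\<lambda>x. expf (-l) x * f x) has_vector_derivative expf (-l) x * Dop f x + (-l) * expf (-l) x * f x) (at x)"
    by (rule has_vector_derivative_mult[OF expf_hasder Dop_works[OF smooth_diff[OF assms]]])
  then show ?thesis by (simp add: Dminus_def algebra_simps)
qed

lemma Dminus_zero_imp:
  assumes "smooth_fun f" "Dminus l f = (\<lambda>x. 0)"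
  shows "f x = expf l x * expf (-l) a * f a"
proof -
  have "(\<lambda>x. expf (-l) x * f x) x = (\<lambda>x. expf (-l) x * f x) a"
    by (rule zero_deriv_const) (use expf_mult_Dminus[OF assms(1), of l] assms(2) in auto)
  then have e: "expf (-l) x * f x = expf (-l) a * f a" by simp
  have "f x = (expf (-l) x * expf l x) * f x" using expf_neg[of l x] by simp
  also have "\<dots> = expf l x * (expf (-l) x * f x)" by (simp only: ac_simps)
  also have "\<dots> = expf l x * expf (-l) a * f a" unfolding e by (simp only: ac_simps)
  finally show ?thesis .
qed

lemma ode_uniq:
  "f \<in> Esol L \<Longrightarrow> (\<forall>i<length L. (Dop ^^ i) f a = 0) \<Longrightarrow> f = (\<lambda>x. 0)"
proof (induction L arbitrary: f)
  case Nil then show ?case by (simp add: Esol_Nil)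
next
  case (Cons l L)
  have sf: "smooth_fun f" and g: "Dminus l f \<in> Esol L" using Cons.prems Esol_Cons by auto
  have "\<forall>i<length L. (Dop ^^ i) (Dminus l f) a = 0"
    using Cons.prems(2) by (simp add: Dk_Dminus sf del: funpow.simps)
  then have "Dminus l f = (\<lambda>x. 0)" using Cons.IH g by blast
  then have "f x = expf l x * expf (-l) a * f a" for x using Dminus_zero_imp sf by blast
  moreover have "f a = 0" using Cons.prems(2) by (metis funpow_0 length_Cons zero_less_Suc)
  ultimately show ?case by auto
qed

lemma smooth_from_ode:
  assumes "\<And>x. f differentiable (at x)" "smooth_fun g" "Dop f = (\<lambda>x. l * f x + g x)"
  shows "smooth_fun f"
proof -
  have "(\<forall>x. (Dop ^^ k) f differentiable (at x)) \<and> (Dop ^^ Suc k) f = (\<lambda>x. l * (Dop ^^ k) f x + (Dop ^^ k) g x)" for k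
  proof (induction k)
    case 0 then show ?case using assms by simp
  next
    case (Suc k)
    have e: "(Dop ^^ Suc k) f = (\<lambda>x. l * (Dop ^^ k) f x + (Dop ^^ k) g x)" using Suc.IH by blast
    have d1: "(Dop ^^ Suc k) f differentiable (at x)" for x
      unfolding e using Suc.IH smooth_Dk_diff[OF assms(2)] by (auto intro!: differentiable_add differentiable_mult differentiable_const)
    have "(Dop ^^ Suc (Suc k)) f = Dop (\<lambda>x. l * (Dop ^^ k) f x + (Dop ^^ k) g x)"
      by (subst funpow.simps(2)) (simp only: o_apply e)
    also have "\<dots> = (\<lambda>x. l * (Dop ^^ Suc k) f x + (Dop ^^ Suc k) g x)"
    proof
      fix x
      have d1: "(\<lambda>x. l * (Dop ^^ k) f x) differentiable (at x)"
        using Suc by (intro differentiable_mult differentiable_const) auto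
      show "Dop (\<lambda>x. l * (Dop ^^ k) f x + (Dop ^^ k) g x) x = l * (Dop ^^ Suc k) f x + (Dop ^^ Suc k) g x"
        using Dop_add[OF d1 smooth_Dk_diff[OF assms(2)]] Dop_cmult[of "(Dop ^^ k) f" x l] Suc by simp
    qed
    finally show ?case using d1 by blast
  qed
  then show ?thesis unfolding smooth_fun_def by blast
qed

text \<open>\<open>(D - l) f = g\<close> has a smooth solution with any prescribed value at \<open>a\<close>
  (variation of constants).\<close>

lemma solve_Dminus:
  assumes "smooth_fun g"
  shows "\<exists>f. smooth_fun f \<and> Dminus l f = g \<and> f a = c"
proof -
  have "\<And>x. isCont (\<lambda>x. expf (-l) x * g x) x"
    using differentiable_imp_continuous_within[OF smooth_diff[OF smooth_mult[OF smooth_expf assms]]] by simp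
  then obtain F where F: "\<And>x. (F has_vector_derivative expf (-l) x * g x) (at x)"
    using antideriv by blast
  define C where "C = c * expf (-l) a - F a"
  define f where "f = (\<lambda>x. expf l x * (F x + C))"
  have fd: "(f has_vector_derivative l * f x + g x) (at x)" for x
  proof -
    have "(f has_vector_derivative expf l x * (expf (-l) x * g x + 0) + l * expf l x * (F x + C)) (at x)"
      unfolding f_def by (rule has_vector_derivative_mult[OF expf_hasder has_vector_derivative_add[OF F has_vector_derivative_const]])
    then show ?thesis using expf_neg[of l x] by (simp add: f_def algebra_simps)
  qed
  then have Df: "Dop f = (\<lambda>x. l * f x + g x)" using Dop_at by blast
  have sf: "smooth_fun f"
    by (rule smooth_from_ode[OF _ assms Df]) (use fd differentiableI_vector in blast)
  have "Dminus l f = g" by (simp add: Dminus_def Df)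
  moreover have "f a = c" using expf_neg[of l a] by (simp add: f_def C_def algebra_simps)
  ultimately show ?thesis using sf by blast
qed

lemma ode_exist: "\<exists>f\<in>Esol L. \<forall>i<length L. (Dop ^^ i) f a = v i"
proof (induction L arbitrary: v)
  case Nil then show ?case using Esol_zero by auto
next
  case (Cons l L)
  obtain g where g: "g \<in> Esol L" and gv: "\<forall>i<length L. (Dop ^^ i) g a = v (Suc i) - l * v i"
    using Cons.IH[of "\<lambda>i. v (Suc i) - l * v i"] by blast
  obtain f where sf: "smooth_fun f" and Tf: "Dminus l f = g" and fa: "f a = v 0"
    using solve_Dminus[OF Esol_smooth[OF g]] by blast
  have fE: "f \<in> Esol (l # L)" using sf Tf g Esol_Cons by blast
  have Df: "Dop f = (\<lambda>x. g x + l * f x)"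
  proof
    fix x have "Dop f x - l * f x = g x" using Tf by (simp add: Dminus_def fun_eq_iff)
    then show "Dop f x = g x + l * f x" by (simp add: diff_eq_eq)
  qed
  have "(Dop ^^ i) f a = v i" if "i \<le> length L" for i
    using that
  proof (induction i)
    case 0 then show ?case using fa by simp
  next
    case (Suc i)
    have "(Dop ^^ Suc i) f = (Dop ^^ i) (\<lambda>x. g x + l * f x)" by (simp only: funpow_Dop_Suc Df)
    also have "\<dots> = (\<lambda>x. (Dop ^^ i) g x + l * (Dop ^^ i) f x)"
      using sf Esol_smooth[OF g] by (simp add: Dk_add smooth_cmult Dk_cmult)
    finally show ?case using Suc gv by simp
  qed
  then have "\<forall>i<length (l # L). (Dop ^^ i) f a = v i" by (simp add: less_Suc_eq_le)
  then show ?case using fE by blast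
qed

lemma Dminus_surj:
  assumes "l \<in> set L" "g \<in> Esol (remove1 l L)"
  shows "\<exists>f\<in>Esol L. Dminus l f = g"
proof -
  obtain f where "smooth_fun f" "Dminus l f = g" using solve_Dminus[OF Esol_smooth[OF assms(2)]] by blast
  then have "f \<in> Esol L" using Esol_remove1[OF assms(1), of f] assms(2) by simp
  then show ?thesis using \<open>Dminus l f = g\<close> by blast
qed

section \<open>Closedness under conjugation\<close>

definition cnj_closed :: "complex list \<Rightarrow> bool" where
  "cnj_closed L \<longleftrightarrow> (\<forall>f\<in>Esol L. (\<lambda>x. cnj (f x)) \<in> Esol L)"

lemma Dminus_cnj: "smooth_fun h \<Longrightarrow> Dminus (cnj m) (\<lambda>x. cnj (h x)) = (\<lambda>x. cnj (Dminus m h x))"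
  by (simp add: Dminus_def fun_eq_iff Dop_cnj smooth_diff)

lemma cnj_closed_remove_real:
  assumes "cnj_closed L" "l \<in> set L" "Im l = 0"
  shows "cnj_closed (remove1 l L)"
  unfolding cnj_closed_def
proof
  fix g assume g: "g \<in> Esol (remove1 l L)"
  obtain f where f: "f \<in> Esol L" "Dminus l f = g" using Dminus_surj[OF assms(2) g] by blast
  have cf: "(\<lambda>x. cnj (f x)) \<in> Esol L" using assms(1) f by (simp add: cnj_closed_def)
  have "cnj l = l" using assms(3) by (simp add: complex_eq_iff)
  then have "Dminus l (\<lambda>x. cnj (f x)) = (\<lambda>x. cnj (g x))"
    using Dminus_cnj[OF Esol_smooth[OF f(1)], of l] f(2) by simp
  then show "(\<lambda>x. cnj (g x)) \<in> Esol (remove1 l L)"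
    using cf Esol_remove1[OF assms(2)] by metis
qed

lemma expf_cnj: "(\<lambda>x. cnj (expf c x)) = expf (cnj c)"
  by (simp add: expf_def fun_eq_iff exp_cnj)

lemma cnj_closed_conj_mem:
  assumes "cnj_closed L" "m \<in> set L"
  shows "cnj m \<in> set L"
  using assms expf_in_Esol[OF assms(2)] expf_in_Esol_iff[of "cnj m" L] expf_cnj
  unfolding cnj_closed_def by metis

lemma cnj_closed_remove_pair:
  assumes "cnj_closed L" "m \<in> set L" "cnj m \<in> set (remove1 m L)"
  shows "cnj_closed (remove1 (cnj m) (remove1 m L))"
  unfolding cnj_closed_def
proof
  fix g assume g: "g \<in> Esol (remove1 (cnj m) (remove1 m L))"
  obtain f1 where f1: "f1 \<in> Esol (remove1 m L)" "Dminus (cnj m) f1 = g" using Dminus_surj[OF assms(3) g] by blast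
  obtain f where f: "f \<in> Esol L" "Dminus m f = f1" using Dminus_surj[OF assms(2) f1(1)] by blast
  have sf: "smooth_fun f" using Esol_smooth[OF f(1)] .
  have cf: "(\<lambda>x. cnj (f x)) \<in> Esol L" using assms(1) f by (simp add: cnj_closed_def)
  then have "Dminus m (\<lambda>x. cnj (f x)) \<in> Esol (remove1 m L)" using Esol_remove1[OF assms(2)] by blast
  then have h: "Dminus (cnj m) (Dminus m (\<lambda>x. cnj (f x))) \<in> Esol (remove1 (cnj m) (remove1 m L))"
    using Esol_remove1[OF assms(3)] by blast
  have "Dminus (cnj m) (Dminus m (\<lambda>x. cnj (f x))) = Dminus m (Dminus (cnj m) (\<lambda>x. cnj (f x)))"
    using Dminus_comm smooth_cnj[OF sf] by metis
  also have "\<dots> = Dminus m (\<lambda>x. cnj (Dminus m f x))" using Dminus_cnj[OF sf, of m] by simp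
  also have "\<dots> = (\<lambda>x. cnj (Dminus (cnj m) (Dminus m f) x))" using Dminus_cnj[OF smooth_Dminus[OF sf], of "cnj m"] by simp
  finally show "(\<lambda>x. cnj (g x)) \<in> Esol (remove1 (cnj m) (remove1 m L))" using h f f1 by simp
qed

lemma Re_in_Esol:
  assumes "cnj_closed L" "f \<in> Esol L"
  shows "(\<lambda>x. of_real (Re (f x))) \<in> Esol L"
proof -
  have "(\<lambda>x. (1/2) * (f x + cnj (f x))) \<in> Esol L"
    using assms by (intro Esol_cmult Esol_add) (auto simp: cnj_closed_def)
  moreover have "(\<lambda>x. (1/2) * (f x + cnj (f x))) = (\<lambda>x. of_real (Re (f x)))"
    by (simp add: fun_eq_iff complex_eq_iff)
  ultimately show ?thesis by simp
qed

lemma Im_in_Esol: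
  assumes "cnj_closed L" "f \<in> Esol L"
  shows "(\<lambda>x. of_real (Im (f x))) \<in> Esol L"
proof -
  have "(\<lambda>x. (-\<i>/2) * (f x - cnj (f x))) \<in> Esol L"
    using assms by (intro Esol_cmult Esol_diff) (auto simp: cnj_closed_def)
  moreover have "(\<lambda>x. (-\<i>/2) * (f x - cnj (f x))) = (\<lambda>x. of_real (Im (f x)))"
    by (simp add: fun_eq_iff complex_eq_iff)
  ultimately show ?thesis by simp
qed

lemma Dk_Re: "smooth_fun f \<Longrightarrow> (Dop ^^ k) (\<lambda>x. of_real (Re (f x))) = (\<lambda>x. of_real (Re ((Dop ^^ k) f x)))"
proof -
  assume sf: "smooth_fun f"
  have e: "(\<lambda>x. of_real (Re (f x))) = (\<lambda>x. (1/2) * (f x + cnj (f x)))"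
    by (simp add: fun_eq_iff complex_eq_iff)
  show ?thesis unfolding e 
    unfolding Dk_cmult[OF smooth_add[OF sf smooth_cnj[OF sf]]] Dk_add[OF sf smooth_cnj[OF sf]] Dk_cnj[OF sf]
    by (simp add: fun_eq_iff complex_eq_iff)
qed

lemma Dk_Im: "smooth_fun f \<Longrightarrow> (Dop ^^ k) (\<lambda>x. of_real (Im (f x))) = (\<lambda>x. of_real (Im ((Dop ^^ k) f x)))"
proof -
  assume sf: "smooth_fun f"
  have e: "(\<lambda>x. of_real (Im (f x))) = (\<lambda>x. (-\<i>/2) * (f x - cnj (f x)))"
    by (simp add: fun_eq_iff complex_eq_iff)
  show ?thesis unfolding e
    unfolding Dk_cmult[OF smooth_diff_fun[OF sf smooth_cnj[OF sf]]] Dk_diff[OF sf smooth_cnj[OF sf]] Dk_cnj[OF sf]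
    by (simp add: fun_eq_iff complex_eq_iff)
qed

section \<open>Counting zeros with Rolle's theorem\<close>

text \<open>The total count of zeros is \<open>i + j + card Z\<close>.\<close>

definition zero_data :: "(real \<Rightarrow> complex) \<Rightarrow> real \<Rightarrow> real \<Rightarrow> nat \<Rightarrow> nat \<Rightarrow> real set \<Rightarrow> bool" where
  "zero_data f a b i j Z \<longleftrightarrow> flat f a i \<and> flat f b j \<and> finite Z \<and> Z \<subseteq> {a<..<b} \<and> (\<forall>z\<in>Z. f z = 0)"

text \<open>Rolle's theorem for finitely many zeros: between consecutive zeros of \<open>\<phi>\<close> lies a zero
  of \<open>\<phi>'\<close>, so \<open>\<phi>'\<close> has at least one zero fewer, all strictly between the zeros of \<open>\<phi>\<close>.\<close>

lemma rolle_many: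
  fixes \<phi> :: "real \<Rightarrow> real"
  assumes "finite P" "continuous_on {a..b} \<phi>" "\<And>x. a < x \<Longrightarrow> x < b \<Longrightarrow> \<phi> differentiable (at x)"
  shows "P \<subseteq> {a..b} \<longrightarrow> (\<forall>p\<in>P. \<phi> p = 0) \<longrightarrow>
    (\<exists>Q. finite Q \<and> card P \<le> card Q + 1 \<and> (\<forall>q\<in>Q. (\<exists>p\<in>P. p < q) \<and> (\<exists>p\<in>P. q < p)) \<and>
         (\<forall>q\<in>Q. DERIV \<phi> q :> 0))"
  using assms(1)
proof (induction P rule: finite_linorder_max_induct)
  case empty then show ?case by (intro impI exI[of _ "{}"]) auto
next
  case (insert c A)
  show ?case
  proof (intro impI)
    assume sub: "insert c A \<subseteq> {a..b}" and z: "\<forall>p\<in>insert c A. \<phi> p = 0"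
    obtain Q where Q: "finite Q" "card A \<le> card Q + 1" "\<forall>q\<in>Q. (\<exists>p\<in>A. p < q) \<and> (\<exists>p\<in>A. q < p)"
      "\<forall>q\<in>Q. DERIV \<phi> q :> 0"
      using insert sub z by auto
    show "\<exists>Q. finite Q \<and> card (insert c A) \<le> card Q + 1 \<and>
         (\<forall>q\<in>Q. (\<exists>p\<in>insert c A. p < q) \<and> (\<exists>p\<in>insert c A. q < p)) \<and> (\<forall>q\<in>Q. DERIV \<phi> q :> 0)"
    proof (cases "A = {}")
      case True then show ?thesis by (intro exI[of _ "{}"]) auto
    next
      case False
      define m where "m = Max A"
      have mA: "m \<in> A" using False insert(1) by (simp add: m_def)
      have mc: "m < c" using insert(2) mA by auto
      have cn: "c \<notin> A" using insert(2) by auto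
      have "a \<le> m" "c \<le> b" using sub mA by auto
      then obtain \<xi> where \<xi>: "m < \<xi>" "\<xi> < c" "DERIV \<phi> \<xi> :> 0"
        using Rolle[of m c \<phi>] mc z mA assms(3) continuous_on_subset[OF assms(2), of "{m..c}"] by force
      have xn: "\<xi> \<notin> Q"
      proof
        assume "\<xi> \<in> Q"
        then obtain p where "p \<in> A" "\<xi> < p" using Q(3) by blast
        then have "p \<le> m" using insert(1) by (simp add: m_def)
        then show False using \<xi> \<open>\<xi> < p\<close> by simp
      qed
      show ?thesis
      proof (intro exI[of _ "insert \<xi> Q"] conjI)
        show "finite (insert \<xi> Q)" using Q by simp
        show "card (insert c A) \<le> card (insert \<xi> Q) + 1" using Q xn cn insert(1) by simp
        show "\<forall>q\<in>insert \<xi> Q. (\<exists>p\<in>insert c A. p < q) \<and> (\<exists>p\<in>insert c A. q < p)"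
          using Q(3) \<xi> mA by blast
        show "\<forall>q\<in>insert \<xi> Q. DERIV \<phi> q :> 0" using Q(4) \<xi> by blast
      qed
    qed
  qed
qed

lemma rolle_pattern:
  fixes \<phi> :: "real \<Rightarrow> real"
  assumes ab: "a < b" and fin: "finite Z" and Zs: "Z \<subseteq> {a<..<b}" and zZ: "\<forall>z\<in>Z. \<phi> z = 0"
    and za: "i > 0 \<Longrightarrow> \<phi> a = 0" and zb: "j > 0 \<Longrightarrow> \<phi> b = 0"
    and cont: "continuous_on {a..b} \<phi>" and dif: "\<And>x. a < x \<Longrightarrow> x < b \<Longrightarrow> \<phi> differentiable (at x)"
  shows "\<exists>Q. finite Q \<and> Q \<subseteq> {a<..<b} \<and> card Z + of_bool (0 < i) + of_bool (0 < j) \<le> card Q + 1 \<and> (\<forall>q\<in>Q. DERIV \<phi> q :> 0)"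
proof -
  define P where "P = Z \<union> (if i > 0 then {a} else {}) \<union> (if j > 0 then {b} else {})"
  have finP: "finite P" using fin by (simp add: P_def)
  have Psub: "P \<subseteq> {a..b}" using Zs ab by (auto simp: P_def)
  have Pz: "\<forall>p\<in>P. \<phi> p = 0" using zZ za zb by (auto simp: P_def split: if_splits)
  have cardP: "card P = card Z + of_bool (0 < i) + of_bool (0 < j)"
  proof -
    have aZ: "a \<notin> Z" and bZ: "b \<notin> Z" using Zs by auto
    show ?thesis using fin aZ bZ ab by (auto simp: P_def of_bool_def card_insert_if)
  qed
  obtain Q where Q: "finite Q" "card P \<le> card Q + 1" "\<forall>q\<in>Q. (\<exists>p\<in>P. p < q) \<and> (\<exists>p\<in>P. q < p)"
      "\<forall>q\<in>Q. DERIV \<phi> q :> 0"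
    using rolle_many[OF finP cont dif] Psub Pz by blast
  have "Q \<subseteq> {a<..<b}"
  proof
    fix q assume "q \<in> Q"
    then obtain p1 p2 where "p1 \<in> P" "p1 < q" "p2 \<in> P" "q < p2" using Q(3) by blast
    then show "q \<in> {a<..<b}" using Psub by force
  qed
  then show ?thesis using Q cardP by auto
qed

text \<open>The Wronskian \<open>h' w - h w'\<close> is, up to the factor \<open>w\<^sup>2\<close>, the derivative of \<open>h / w\<close>.
  Applying Rolle's theorem to \<open>h / w\<close> for a nonvanishing weight \<open>w\<close> counts the zeros of the
  Wronskian; the weight \<open>w = 1\<close> gives ordinary differentiation, the weight
  \<open>w = sin (\<beta> x + \<gamma>)\<close> is used for a pair of conjugate roots.\<close>

definition wronskian :: "(real \<Rightarrow> complex) \<Rightarrow> (real \<Rightarrow> complex) \<Rightarrow> real \<Rightarrow> complex" where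
  "wronskian h w = (\<lambda>x. Dop h x * w x - h x * Dop w x)"

lemma smooth_wronskian: "smooth_fun h \<Longrightarrow> smooth_fun w \<Longrightarrow> smooth_fun (wronskian h w)"
  unfolding wronskian_def by (intro smooth_diff_fun smooth_mult smooth_Dop)

lemma real_valued_wronskian:
  "smooth_fun h \<Longrightarrow> smooth_fun w \<Longrightarrow> real_valued h \<Longrightarrow> real_valued w \<Longrightarrow> real_valued (wronskian h w)"
  unfolding wronskian_def by (intro real_valued_diff real_valued_mult real_valued_Dop)

lemma wronskian_one: "wronskian h (\<lambda>x. 1) = Dop h"
  by (simp add: wronskian_def Dop_const_fun)

lemma Dop_wronskian:
  assumes "smooth_fun h" "smooth_fun w"
  shows "Dop (wronskian h w) = (\<lambda>x. Dop (Dop h) x * w x - h x * Dop (Dop w) x)"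
proof
  fix x
  have "(wronskian h w has_vector_derivative
      (Dop h x * Dop w x + Dop (Dop h) x * w x) - (h x * Dop (Dop w) x + Dop h x * Dop w x)) (at x)"
    unfolding wronskian_def using assms
    by (intro has_vector_derivative_diff has_vector_derivative_mult Dop_works smooth_diff smooth_Dop)
  then show "Dop (wronskian h w) x = Dop (Dop h) x * w x - h x * Dop (Dop w) x"
    by (simp add: Dop_at)
qed

lemma quotient_deriv:
  assumes "smooth_fun h" "smooth_fun w" "real_valued h" "real_valued w" "w x \<noteq> 0"
  shows "((\<lambda>x. Re (h x) / Re (w x)) has_real_derivative
           Re (wronskian h w x) / (Re (w x) * Re (w x))) (at x)"
proof -
  have "Im (Dop h x) = 0" "Im (Dop w x) = 0" "Im (h x) = 0" "Im (w x) = 0"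
    using assms real_valued_Dop by (auto simp: real_valued_def)
  moreover have "Re (w x) \<noteq> 0" using assms(4,5) by (simp add: real_valued_def complex_eq_iff)
  ultimately show ?thesis unfolding wronskian_def
    using DERIV_divide[OF real_valued_deriv[OF smooth_diff[OF assms(1)]]
        real_valued_deriv[OF smooth_diff[OF assms(2)]], of x] by simp
qed

lemma quotient_cont:
  assumes "smooth_fun h" "smooth_fun w" "real_valued w" "\<forall>x\<in>S. w x \<noteq> 0"
  shows "continuous_on S (\<lambda>x. Re (h x) / Re (w x))"
  using assms by (intro continuous_intros smooth_cont) (auto simp: real_valued_def complex_eq_iff)

lemma zero_data_wronskian:
  assumes ab: "a < b" and sm: "smooth_fun h" "smooth_fun w" and re: "real_valued h" "real_valued w"
    and w0: "\<forall>x\<in>{a..b}. w x \<noteq> 0" and z: "zero_data h a b i j Z"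
  shows "\<exists>Q. zero_data (wronskian h w) a b (i - 1) (j - 1) Q \<and> i + j + card Z \<le> (i - 1) + (j - 1) + card Q + 1"
proof -
  let ?\<phi> = "\<lambda>x. Re (h x) / Re (w x)"
  have fl: "flat h a i" "flat h b j" and Z: "finite Z" "Z \<subseteq> {a<..<b}" "\<forall>z\<in>Z. ?\<phi> z = 0"
    using z by (auto simp: zero_data_def)
  have dif: "?\<phi> differentiable (at x)" if "a < x" "x < b" for x
    using quotient_deriv[OF sm re, of x] w0 that by (auto simp: real_differentiable_def)
  obtain Q where Q: "finite Q" "Q \<subseteq> {a<..<b}" "card Z + of_bool (0 < i) + of_bool (0 < j) \<le> card Q + 1"
      "\<forall>q\<in>Q. DERIV ?\<phi> q :> 0"
    using rolle_pattern[OF ab Z, of i j] flat_imp_zero[OF fl(1)] flat_imp_zero[OF fl(2)]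
      quotient_cont[OF sm(1,2) re(2) w0] dif by auto
  have "wronskian h w q = 0" if "q \<in> Q" for q
  proof -
    have wq: "w q \<noteq> 0" and "Re (w q) \<noteq> 0" using w0 Q(2) that re(2) by (auto simp: real_valued_def complex_eq_iff)
    then have "Re (wronskian h w q) = 0"
      using DERIV_unique[OF quotient_deriv[OF sm re wq]] Q(4) that by force
    then show ?thesis using real_valued_wronskian[OF sm re] by (simp add: real_valued_def complex_eq_iff)
  qed
  moreover have "flat (wronskian h w) c (k - 1)" if "flat h c k" for c k
    unfolding wronskian_def using that sm
    by (intro flat_diff flat_mult_right flat_Dop smooth_mult smooth_Dop) (auto elim: flat_mono)
  ultimately have "zero_data (wronskian h w) a b (i - 1) (j - 1) Q" using Q fl by (simp add: zero_data_def)
  moreover have "i + j + card Z \<le> (i - 1) + (j - 1) + card Q + 1"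
    using Q(3) by (auto simp: of_bool_def split: if_splits)
  ultimately show ?thesis by blast
qed

corollary zero_data_Dop:
  assumes "a < b" "smooth_fun f" "real_valued f" "zero_data f a b i j Z"
  shows "\<exists>Z'. zero_data (Dop f) a b (i - 1) (j - 1) Z' \<and> i + j + card Z \<le> (i - 1) + (j - 1) + card Z' + 1"
  using zero_data_wronskian[OF assms(1,2) smooth_const assms(3) _ _ assms(4), of 1]
  by (simp add: wronskian_one real_valued_def)

text \<open>Conversely, if the Wronskian vanishes then \<open>h / w\<close> is constant, so \<open>h\<close> vanishes as soon
  as it has one zero.\<close>

lemma wronskian_zero_imp:
  assumes ab: "a < b" and sm: "smooth_fun h" "smooth_fun w" and re: "real_valued h" "real_valued w"
    and w0: "\<forall>x\<in>{a..b}. w x \<noteq> 0" and W: "\<forall>x\<in>{a..b}. wronskian h w x = 0"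
    and x0: "x0 \<in> {a..b}" "h x0 = 0"
  shows "\<forall>x\<in>{a..b}. h x = 0"
proof
  let ?\<phi> = "\<lambda>x. Re (h x) / Re (w x)"
  have const: "?\<phi> x = ?\<phi> a" if "a \<le> x" "x \<le> b" for x
  proof (rule DERIV_isconst2[OF ab quotient_cont[OF sm(1,2) re(2) w0] _ that])
    fix y assume "a < y" "y < b"
    then show "DERIV ?\<phi> y :> 0" using quotient_deriv[OF sm re, of y] w0 W by auto
  qed
  fix x assume x: "x \<in> {a..b}"
  have "?\<phi> x = ?\<phi> x0" using const[of x] const[of x0] x x0(1) by simp
  then have "Re (h x) = 0" using x0(2) w0 x re(2) by (auto simp: real_valued_def complex_eq_iff)
  then show "h x = 0" using re(1) by (simp add: real_valued_def complex_eq_iff)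
qed

lemma zero_data_mult:
  assumes "smooth_fun w" "smooth_fun f" "zero_data f a b i j Z"
  shows "zero_data (\<lambda>x. w x * f x) a b i j Z"
  using assms flat_mult[OF assms(1,2)] unfolding zero_data_def by auto

lemma zero_data_div:
  assumes "smooth_fun w" "smooth_fun f" "w a \<noteq> 0" "w b \<noteq> 0" "\<forall>z\<in>Z. w z \<noteq> 0" "zero_data (\<lambda>x. w x * f x) a b i j Z"
  shows "zero_data f a b i j Z"
  using assms flat_div[OF assms(1,2)] unfolding zero_data_def by auto

lemma zero_data_zero_exists:
  assumes "zero_data f a b i j Z" "1 \<le> i + j + card Z" "a < b"
  shows "\<exists>x\<in>{a..b}. f x = 0"
proof -
  have "i > 0 \<or> j > 0 \<or> Z \<noteq> {}" using assms(2) by auto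
  then show ?thesis
  proof (elim disjE)
    assume "i > 0" then have "(Dop ^^ 0) f a = 0" using assms(1) unfolding zero_data_def flat_def by blast
    then have "f a = 0" by simp
    then show ?thesis using assms(3) by auto
  next
    assume "j > 0" then have "(Dop ^^ 0) f b = 0" using assms(1) unfolding zero_data_def flat_def by blast
    then have "f b = 0" by simp
    then show ?thesis using assms(3) by auto
  next
    assume "Z \<noteq> {}" then obtain z where "z \<in> Z" by blast
    moreover have "z \<in> {a..b}" "f z = 0" using assms(1) \<open>z \<in> Z\<close> by (auto simp: zero_data_def)
    ultimately show ?thesis by blast
  qed
qed

text \<open>Rolle's theorem applied twice: if the derivative of the Wronskian of \<open>h\<close> and \<open>w\<close> is
  \<open>v g\<close> with \<open>v\<close> nonvanishing, then \<open>g\<close> has at most two zeros fewer than \<open>h\<close>.\<close>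

lemma zero_data_wronskian_deriv:
  assumes ab: "a < b" and sm: "smooth_fun h" "smooth_fun w" and re: "real_valued h" "real_valued w"
    and w0: "\<forall>x\<in>{a..b}. w x \<noteq> 0" and z: "zero_data h a b i j Z"
    and sv: "smooth_fun v" and v0: "\<forall>x\<in>{a..b}. v x \<noteq> 0" and sg: "smooth_fun g"
    and DW: "Dop (wronskian h w) = (\<lambda>x. v x * g x)"
  shows "\<exists>Q'. zero_data g a b (i - 2) (j - 2) Q' \<and> i + j + card Z \<le> (i - 2) + (j - 2) + card Q' + 2"
proof -
  obtain Q where zW: "zero_data (wronskian h w) a b (i - 1) (j - 1) Q"
      and cntW: "i + j + card Z \<le> (i - 1) + (j - 1) + card Q + 1"
    using zero_data_wronskian[OF ab sm re w0 z] by blast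
  obtain Q' where zDW: "zero_data (Dop (wronskian h w)) a b (i - 1 - 1) (j - 1 - 1) Q'"
      and cntDW: "(i - 1) + (j - 1) + card Q \<le> (i - 1 - 1) + (j - 1 - 1) + card Q' + 1"
    using zero_data_Dop[OF ab smooth_wronskian[OF sm] real_valued_wronskian[OF sm re] zW] by blast
  have "zero_data g a b (i - 1 - 1) (j - 1 - 1) Q'"
    by (rule zero_data_div[OF sv sg]) (use v0 zDW DW ab in \<open>auto simp: zero_data_def\<close>)
  moreover have "i - 1 - 1 = i - 2" "j - 1 - 1 = j - 2" by simp_all
  ultimately show ?thesis using cntW cntDW by (intro exI[of _ Q']) simp
qed

text \<open>Conversely, if the Wronskian has vanishing derivative and \<open>h\<close> has at least two zeros, then
  the Wronskian has a zero, hence vanishes, hence \<open>h\<close> vanishes.\<close>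

lemma wronskian_deriv_zero_imp:
  assumes ab: "a < b" and sm: "smooth_fun h" "smooth_fun w" and re: "real_valued h" "real_valued w"
    and w0: "\<forall>x\<in>{a..b}. w x \<noteq> 0" and z: "zero_data h a b i j Z" and two: "2 \<le> i + j + card Z"
    and DW0: "\<forall>x\<in>{a..b}. Dop (wronskian h w) x = 0"
  shows "\<forall>x\<in>{a..b}. h x = 0"
proof -
  have sW: "smooth_fun (wronskian h w)" and rW: "real_valued (wronskian h w)"
    using sm re by (simp_all add: smooth_wronskian real_valued_wronskian)
  obtain Q where zW: "zero_data (wronskian h w) a b (i - 1) (j - 1) Q"
      and cntW: "i + j + card Z \<le> (i - 1) + (j - 1) + card Q + 1"
    using zero_data_wronskian[OF ab sm re w0 z] by blast
  have "1 \<le> (i - 1) + (j - 1) + card Q" using two cntW by linarith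
  then obtain w1 where "w1 \<in> {a..b}" "wronskian h w w1 = 0" using zero_data_zero_exists[OF zW _ ab] by blast
  then have W0: "\<forall>x\<in>{a..b}. wronskian h w x = 0"
    by (intro wronskian_zero_imp[OF ab sW smooth_const rW, of 1]) (use DW0 in \<open>auto simp: wronskian_one real_valued_def\<close>)
  have "1 \<le> i + j + card Z" using two by linarith
  then obtain x0 where "x0 \<in> {a..b}" "h x0 = 0" using zero_data_zero_exists[OF z _ ab] by blast
  then show ?thesis by (intro wronskian_zero_imp[OF ab sm re w0 W0])
qed

section \<open>The trigonometric weight\<close>

text \<open>\<open>sinf \<beta> \<gamma> x = sin (\<beta> x + \<gamma>)\<close> solves \<open>w'' = -\<beta>\<^sup>2 w\<close>; it is the weight used for a pair
  of conjugate roots \<open>\<alpha> \<plusminus> i \<beta>\<close>.\<close>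

definition sinf :: "real \<Rightarrow> real \<Rightarrow> real \<Rightarrow> complex" where
  "sinf \<beta> \<gamma> = (\<lambda>x. complex_of_real (sin (\<beta> * x + \<gamma>)))"
definition cosf :: "real \<Rightarrow> real \<Rightarrow> real \<Rightarrow> complex" where
  "cosf \<beta> \<gamma> = (\<lambda>x. complex_of_real (cos (\<beta> * x + \<gamma>)))"

lemma sin_DERIV: "((\<lambda>x. sin (\<beta> * x + \<gamma>)) has_real_derivative cos (\<beta> * x + \<gamma>) * \<beta>) (at x)"
  by (auto intro!: derivative_eq_intros)

lemma cos_DERIV: "((\<lambda>x. cos (\<beta> * x + \<gamma>)) has_real_derivative - sin (\<beta> * x + \<gamma>) * \<beta>) (at x)"
  by (auto intro!: derivative_eq_intros)

lemma sinf_hasder: "(sinf \<beta> \<gamma> has_vector_derivative of_real \<beta> * cosf \<beta> \<gamma> x) (at x)"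
proof -
  have "(sinf \<beta> \<gamma> has_vector_derivative of_real (cos (\<beta> * x + \<gamma>) * \<beta>)) (at x)"
    unfolding sinf_def by (rule has_vector_derivative_of_real[OF sin_DERIV])
  then show ?thesis by (simp add: cosf_def mult.commute)
qed

lemma cosf_hasder: "(cosf \<beta> \<gamma> has_vector_derivative - of_real \<beta> * sinf \<beta> \<gamma> x) (at x)"
proof -
  have "(cosf \<beta> \<gamma> has_vector_derivative of_real (- sin (\<beta> * x + \<gamma>) * \<beta>)) (at x)"
    unfolding cosf_def by (rule has_vector_derivative_of_real[OF cos_DERIV])
  then show ?thesis by (simp add: sinf_def mult.commute)
qed

lemma Dop_sinf: "Dop (sinf \<beta> \<gamma>) = (\<lambda>x. of_real \<beta> * cosf \<beta> \<gamma> x)"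
  using sinf_hasder Dop_at by blast

lemma sc_diff: "sinf \<beta> \<gamma> differentiable (at x)" "cosf \<beta> \<gamma> differentiable (at x)"
  using sinf_hasder cosf_hasder by (blast intro: differentiableI_vector)+

lemma Dk_sc: "\<exists>A B. (Dop ^^ k) (sinf \<beta> \<gamma>) = (\<lambda>x. A * sinf \<beta> \<gamma> x + B * cosf \<beta> \<gamma> x)"
proof (induction k)
  case 0 show ?case by (intro exI[of _ 1] exI[of _ 0]) simp
next
  case (Suc k)
  then obtain A B where e: "(Dop ^^ k) (sinf \<beta> \<gamma>) = (\<lambda>x. A * sinf \<beta> \<gamma> x + B * cosf \<beta> \<gamma> x)" by blast
  have "Dop (\<lambda>x. A * sinf \<beta> \<gamma> x + B * cosf \<beta> \<gamma> x) =
      (\<lambda>x. (- B * of_real \<beta>) * sinf \<beta> \<gamma> x + (A * of_real \<beta>) * cosf \<beta> \<gamma> x)"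
  proof
    fix x
    have "((\<lambda>x. A * sinf \<beta> \<gamma> x + B * cosf \<beta> \<gamma> x) has_vector_derivative
        A * (of_real \<beta> * cosf \<beta> \<gamma> x) + B * (- of_real \<beta> * sinf \<beta> \<gamma> x)) (at x)"
      by (intro has_vector_derivative_add has_vector_derivative_mult_right sinf_hasder cosf_hasder)
    then show "Dop (\<lambda>x. A * sinf \<beta> \<gamma> x + B * cosf \<beta> \<gamma> x) x =
      (- B * of_real \<beta>) * sinf \<beta> \<gamma> x + (A * of_real \<beta>) * cosf \<beta> \<gamma> x"
      by (simp add: Dop_at algebra_simps)
  qed
  then have "(Dop ^^ Suc k) (sinf \<beta> \<gamma>) = (\<lambda>x. (- B * of_real \<beta>) * sinf \<beta> \<gamma> x + (A * of_real \<beta>) * cosf \<beta> \<gamma> x)"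
    using e by (simp only: funpow.simps(2) o_apply)
  then show ?case by blast
qed

lemma smooth_sinf: "smooth_fun (sinf \<beta> \<gamma>)"
  unfolding smooth_fun_def
proof (intro allI)
  fix k x
  obtain A B where "(Dop ^^ k) (sinf \<beta> \<gamma>) = (\<lambda>x. A * sinf \<beta> \<gamma> x + B * cosf \<beta> \<gamma> x)" using Dk_sc by blast
  then show "(Dop ^^ k) (sinf \<beta> \<gamma>) differentiable at x"
    by (simp add: differentiable_add differentiable_mult differentiable_const sc_diff)
qed

lemma Dop_cosf: "Dop (cosf \<beta> \<gamma>) = (\<lambda>x. - of_real \<beta> * sinf \<beta> \<gamma> x)"
  using cosf_hasder Dop_at by blast

lemma Dop_Dop_sinf: "Dop (Dop (sinf \<beta> \<gamma>)) = (\<lambda>x. - of_real (\<beta>\<^sup>2) * sinf \<beta> \<gamma> x)"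
proof
  fix x
  have "Dop (\<lambda>x. of_real \<beta> * cosf \<beta> \<gamma> x) x = of_real \<beta> * Dop (cosf \<beta> \<gamma>) x"
    by (rule Dop_cmult[OF sc_diff(2)])
  then show "Dop (Dop (sinf \<beta> \<gamma>)) x = - of_real (\<beta>\<^sup>2) * sinf \<beta> \<gamma> x"
    by (simp add: Dop_sinf Dop_cosf power2_eq_square)
qed

text \<open>\<open>sin (\<beta> x + \<gamma>)\<close> with the phase centred at \<open>(a + b) / 2\<close> is positive on \<open>[a,b]\<close>
  as long as \<open>\<beta> (b - a) < pi\<close>; this is where the bound on the imaginary parts enters.\<close>

lemma sin_pos_interval:
  assumes "0 < \<beta>" "\<beta> * (b - a) < pi" "x \<in> {a..b}"
  shows "0 < sin (\<beta> * x + (pi / 2 - \<beta> * (a + b) / 2))"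
proof -
  have e: "\<beta> * x + (pi / 2 - \<beta> * (a + b) / 2) = pi / 2 + \<beta> * (x - (a + b) / 2)"
    by (simp add: algebra_simps)
  have d1: "x - (a + b) / 2 \<le> (b - a) / 2" "- ((b - a) / 2) \<le> x - (a + b) / 2"
    using assms(3) by (auto simp: field_simps)
  have u: "\<beta> * (x - (a + b) / 2) \<le> \<beta> * ((b - a) / 2)"
    using assms(1) d1 by (intro mult_left_mono) auto
  have l: "\<beta> * (- ((b - a) / 2)) \<le> \<beta> * (x - (a + b) / 2)"
    using assms(1) d1 by (intro mult_left_mono) auto
  have "\<beta> * ((b - a) / 2) < pi / 2" using assms(2) by simp
  then show ?thesis unfolding e using u l by (intro sin_gt_zero) auto
qed

section \<open>The Chebyshev property\<close>

definition admissible :: "real \<Rightarrow> real \<Rightarrow> complex list \<Rightarrow> bool" where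
  "admissible a b L \<longleftrightarrow> cnj_closed L \<and> (\<forall>m\<in>set L. \<bar>Im m\<bar> * (b - a) < pi)"

definition chebyshev :: "real \<Rightarrow> real \<Rightarrow> complex list \<Rightarrow> bool" where
  "chebyshev a b L \<longleftrightarrow> (\<forall>f i j Z. f \<in> Esol L \<longrightarrow> real_valued f \<longrightarrow> zero_data f a b i j Z \<longrightarrow> length L \<le> i + j + card Z
      \<longrightarrow> (\<forall>x\<in>{a..b}. f x = 0))"

lemma real_valued_Dminus: "smooth_fun f \<Longrightarrow> real_valued f \<Longrightarrow> Im l = 0 \<Longrightarrow> real_valued (Dminus l f)"
  unfolding Dminus_def by (intro real_valued_diff real_valued_Dop real_valued_cmult)

lemma Dop_expf_mult: "smooth_fun f \<Longrightarrow> Dop (\<lambda>x. expf (-l) x * f x) = (\<lambda>x. expf (-l) x * Dminus l f x)"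
  using expf_mult_Dminus Dop_at by blast

text \<open>Removing a real root \<open>l\<close>: the derivative of \<open>exp (-l x) f\<close> is \<open>exp (-l x) (D - l) f\<close>, which
  lies in the smaller space and has at most one zero fewer.\<close>

lemma chebyshev_step_real:
  assumes ab: "a < b" and l: "l \<in> set L" "Im l = 0" and IH: "chebyshev a b (remove1 l L)"
  shows "chebyshev a b L"
  unfolding chebyshev_def
proof (intro allI impI)
  fix f i j Z
  assume fE: "f \<in> Esol L" and rf: "real_valued f" and z: "zero_data f a b i j Z" and N: "length L \<le> i + j + card Z"
  have sf: "smooth_fun f" using Esol_smooth[OF fE] .
  define h where "h = (\<lambda>x. expf (-l) x * f x)"
  have sh: "smooth_fun h" unfolding h_def by (intro smooth_mult smooth_expf sf)
  have rh: "real_valued h" unfolding h_def using l(2) rf by (intro real_valued_mult real_valued_expf) auto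
  have zh: "zero_data h a b i j Z" unfolding h_def by (rule zero_data_mult[OF smooth_expf sf z])
  have Dh: "Dop h = (\<lambda>x. expf (-l) x * Dminus l f x)" unfolding h_def by (rule Dop_expf_mult[OF sf])
  obtain Z' where z': "zero_data (Dop h) a b (i - 1) (j - 1) Z'" and cnt: "i + j + card Z \<le> (i - 1) + (j - 1) + card Z' + 1"
    using zero_data_Dop[OF ab sh rh zh] by blast
  have zT: "zero_data (Dminus l f) a b (i - 1) (j - 1) Z'"
    by (rule zero_data_div[OF smooth_expf smooth_Dminus[OF sf] expf_nonzero expf_nonzero _ z'[unfolded Dh]])
      (simp add: expf_nonzero)
  have TE: "Dminus l f \<in> Esol (remove1 l L)" using fE Esol_remove1[OF l(1)] by blast
  have L1: "1 \<le> length L" using l(1) by (cases L) auto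
  have "length (remove1 l L) \<le> (i - 1) + (j - 1) + card Z'" using N cnt l(1) L1 by (simp add: length_remove1)
  then have T0: "\<forall>x\<in>{a..b}. Dminus l f x = 0"
    using IH[unfolded chebyshev_def, rule_format, OF TE real_valued_Dminus[OF sf rf l(2)] zT] by blast
  have "1 \<le> i + j + card Z" using N L1 by linarith
  then obtain x0 where x0: "x0 \<in> {a..b}" "h x0 = 0" using zero_data_zero_exists[OF zh _ ab] by blast
  have "\<forall>x\<in>{a..b}. h x = 0"
    by (rule wronskian_zero_imp[OF ab sh smooth_const rh _ _ _ x0, of 1])
      (use T0 in \<open>auto simp: wronskian_one Dh real_valued_def\<close>)
  then show "\<forall>x\<in>{a..b}. f x = 0" by (simp add: h_def expf_nonzero)
qed

lemma pair_wronskian_identity: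
  fixes m :: complex
  assumes sf: "smooth_fun f"
  defines "\<alpha> \<equiv> complex_of_real (Re m)" and "\<beta> \<equiv> \<bar>Im m\<bar>"
  shows "Dop (wronskian (\<lambda>x. expf (-\<alpha>) x * f x) (sinf \<beta> \<gamma>))
    = (\<lambda>x. (sinf \<beta> \<gamma> x * expf (-\<alpha>) x) * Dminus (cnj m) (Dminus m f) x)"
proof
  fix x
  let ?h = "\<lambda>x. expf (-\<alpha>) x * f x"
  have sh: "smooth_fun ?h" by (intro smooth_mult smooth_expf sf)
  have DDh: "Dop (Dop ?h) = (\<lambda>x. expf (-\<alpha>) x * Dminus \<alpha> (Dminus \<alpha> f) x)"
    by (simp add: Dop_expf_mult sf smooth_Dminus)
  have key: "Dminus \<alpha> (Dminus \<alpha> f) x + of_real (\<beta>\<^sup>2) * f x = Dminus (cnj m) (Dminus m f) x"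
  proof -
    have "cnj m + m = \<alpha> + \<alpha>" "cnj m * m = \<alpha> * \<alpha> + of_real (\<beta>\<^sup>2)"
      by (simp_all add: \<alpha>_def \<beta>_def complex_eq_iff power2_eq_square)
    then show ?thesis by (simp add: Dminus_Dminus[OF sf] algebra_simps)
  qed
  have "Dop (wronskian ?h (sinf \<beta> \<gamma>)) x
      = (sinf \<beta> \<gamma> x * expf (-\<alpha>) x) * (Dminus \<alpha> (Dminus \<alpha> f) x + of_real (\<beta>\<^sup>2) * f x)"
    unfolding Dop_wronskian[OF sh smooth_sinf] DDh Dop_Dop_sinf by (simp add: algebra_simps)
  then show "Dop (wronskian ?h (sinf \<beta> \<gamma>)) x = (sinf \<beta> \<gamma> x * expf (-\<alpha>) x) * Dminus (cnj m) (Dminus m f) x"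
    by (simp only: key)
qed

text \<open>Removing a pair of conjugate roots: Rolle's theorem for \<open>h / w\<close> and for the Wronskian
  \<open>W\<close> loses at most two zeros, and \<open>W' = w exp (-\<alpha> x) g\<close> with \<open>g\<close> in the smaller space.
  Hence \<open>g = 0\<close>, so \<open>W = 0\<close>, so \<open>h / w\<close> is constant and vanishes.\<close>

lemma chebyshev_step_pair:
  assumes ab: "a < b" and m: "m \<in> set L" "Im m \<noteq> 0" and bnd: "\<bar>Im m\<bar> * (b - a) < pi"
    and cm: "cnj m \<in> set (remove1 m L)" and IH: "chebyshev a b (remove1 (cnj m) (remove1 m L))"
  shows "chebyshev a b L"
  unfolding chebyshev_def
proof (intro allI impI)
  fix f i j Z
  assume fE: "f \<in> Esol L" and rf: "real_valued f" and z: "zero_data f a b i j Z" and N: "length L \<le> i + j + card Z"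
  have sf: "smooth_fun f" using Esol_smooth[OF fE] .
  define \<alpha> where "\<alpha> = complex_of_real (Re m)"
  define \<beta> where "\<beta> = \<bar>Im m\<bar>"
  define w where "w = sinf \<beta> (pi / 2 - \<beta> * (a + b) / 2)"
  define h where "h = (\<lambda>x. expf (-\<alpha>) x * f x)"
  define g where "g = Dminus (cnj m) (Dminus m f)"
  have sh: "smooth_fun h" unfolding h_def by (intro smooth_mult smooth_expf sf)
  have rh: "real_valued h" unfolding h_def using rf by (intro real_valued_mult real_valued_expf) (auto simp: \<alpha>_def)
  have zh: "zero_data h a b i j Z" unfolding h_def by (rule zero_data_mult[OF smooth_expf sf z])
  have sw: "smooth_fun w" unfolding w_def by (rule smooth_sinf)
  have rw: "real_valued w" by (simp add: w_def sinf_def real_valued_def)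
  have wpos: "0 < Re (w x)" if "x \<in> {a..b}" for x
    using sin_pos_interval[of \<beta> b a x] m(2) bnd that by (simp add: w_def sinf_def \<beta>_def)
  then have w0: "\<forall>x\<in>{a..b}. w x \<noteq> 0" by force
  have DW: "Dop (wronskian h w) = (\<lambda>x. (w x * expf (-\<alpha>) x) * g x)"
    unfolding h_def w_def g_def \<alpha>_def \<beta>_def by (rule pair_wronskian_identity[OF sf])
  have gE: "g \<in> Esol (remove1 (cnj m) (remove1 m L))"
    using fE Esol_remove1[OF m(1)] Esol_remove1[OF cm] unfolding g_def by blast
  have rg: "real_valued g"
    unfolding g_def Dminus_Dminus[OF sf]
    by (intro real_valued_add real_valued_diff real_valued_cmult real_valued_Dop smooth_Dop sf rf)
      (auto simp: complex_eq_iff)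
  have sv: "smooth_fun (\<lambda>x. w x * expf (-\<alpha>) x)" by (intro smooth_mult sw smooth_expf)
  have v0: "\<forall>x\<in>{a..b}. w x * expf (-\<alpha>) x \<noteq> 0" using w0 by (simp add: expf_nonzero)
  have sg: "smooth_fun g" unfolding g_def by (intro smooth_Dminus sf)
  obtain Q' where zg: "zero_data g a b (i - 2) (j - 2) Q'"
      and cnt: "i + j + card Z \<le> (i - 2) + (j - 2) + card Q' + 2"
    using zero_data_wronskian_deriv[OF ab sh sw rh rw w0 zh sv v0 sg DW] by blast
  have L2: "2 \<le> length L"
    using m(1) cm length_pos_if_in_set[OF cm] by (simp add: length_remove1)
  have "length (remove1 (cnj m) (remove1 m L)) \<le> (i - 2) + (j - 2) + card Q'"
    using N cnt m(1) cm L2 by (simp add: length_remove1)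
  then have "\<forall>x\<in>{a..b}. g x = 0"
    using IH[unfolded chebyshev_def, rule_format, OF gE rg zg] by blast
  then have "\<forall>x\<in>{a..b}. Dop (wronskian h w) x = 0" by (simp add: DW)
  moreover have "2 \<le> i + j + card Z" using N L2 by linarith
  ultimately have "\<forall>x\<in>{a..b}. h x = 0" using wronskian_deriv_zero_imp[OF ab sh sw rh rw w0 zh] by blast
  then show "\<forall>x\<in>{a..b}. f x = 0" by (simp add: h_def expf_nonzero)
qed

text \<open>The Chebyshev property for admissible root lists, by induction on the length: remove a
  real root if there is one, otherwise a pair of conjugate roots.\<close>

lemma admissible_sub: "admissible a b L \<Longrightarrow> cnj_closed L' \<Longrightarrow> set L' \<subseteq> set L \<Longrightarrow> admissible a b L'"
  unfolding admissible_def by blast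

lemma admissible_chebyshev: "a < b \<Longrightarrow> admissible a b L \<Longrightarrow> chebyshev a b L"
proof (induction "length L" arbitrary: L rule: less_induct)
  case less
  show ?case
  proof (cases "L = []")
    case True then show ?thesis by (auto simp: chebyshev_def Esol_Nil)
  next
    case False
    show ?thesis
    proof (cases "\<exists>l\<in>set L. Im l = 0")
      case True
      then obtain l where l: "l \<in> set L" "Im l = 0" by blast
      have g: "admissible a b (remove1 l L)"
        using admissible_sub[OF less.prems(2) cnj_closed_remove_real[OF _ l] set_remove1_subset] less.prems(2)
        by (simp add: admissible_def)
      have "length L > 0" using l(1) by (cases L) auto
      then have "length (remove1 l L) < length L" using l(1) by (simp add: length_remove1)
      then have "chebyshev a b (remove1 l L)" using less.hyps less.prems(1) g by blast
      then show ?thesis by (rule chebyshev_step_real[OF less.prems(1) l])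
    next
      case nr: False
      define m where "m = hd L"
      have m: "m \<in> set L" using False by (simp add: m_def)
      have mI: "Im m \<noteq> 0" using nr m by blast
      have ccL: "cnj_closed L" using less.prems(2) by (simp add: admissible_def)
      have cm: "cnj m \<in> set L" by (rule cnj_closed_conj_mem[OF ccL m])
      have "cnj m \<noteq> m" using mI by (simp add: complex_eq_iff)
      then have cm': "cnj m \<in> set (remove1 m L)" using cm by (simp add: in_set_remove1)
      have sub: "set (remove1 (cnj m) (remove1 m L)) \<subseteq> set L"
        by (meson set_remove1_subset subset_trans)
      have g: "admissible a b (remove1 (cnj m) (remove1 m L))"
        using admissible_sub[OF less.prems(2) cnj_closed_remove_pair[OF ccL m cm'] sub] .
      have "length L > 0" using m by (cases L) auto
      then have "length (remove1 (cnj m) (remove1 m L)) < length L"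
        using m cm' by (simp add: length_remove1)
      then have "chebyshev a b (remove1 (cnj m) (remove1 m L))" using less.hyps less.prems(1) g by blast
      moreover have "\<bar>Im m\<bar> * (b - a) < pi" using less.prems(2) m by (simp add: admissible_def)
      ultimately show ?thesis using chebyshev_step_pair[OF less.prems(1) m mI _ cm'] by blast
    qed
  qed
qed

text \<open>For complex-valued elements apply the real case to the real and imaginary parts.\<close>

lemma zero_data_Re: "smooth_fun f \<Longrightarrow> zero_data f a b i j Z \<Longrightarrow> zero_data (\<lambda>x. of_real (Re (f x))) a b i j Z"
  unfolding zero_data_def flat_def by (simp add: Dk_Re)

lemma zero_data_Im: "smooth_fun f \<Longrightarrow> zero_data f a b i j Z \<Longrightarrow> zero_data (\<lambda>x. of_real (Im (f x))) a b i j Z"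
  unfolding zero_data_def flat_def by (simp add: Dk_Im)

lemma chebyshev_complex:
  assumes ab: "a < b" and g: "admissible a b L" and fE: "f \<in> Esol L" and z: "zero_data f a b i j Z"
    and N: "length L \<le> i + j + card Z"
  shows "\<forall>x\<in>{a..b}. f x = 0"
proof -
  have C: "chebyshev a b L" by (rule admissible_chebyshev[OF ab g])
  have ccL: "cnj_closed L" using g by (simp add: admissible_def)
  have sf: "smooth_fun f" using Esol_smooth[OF fE] .
  have "\<forall>x\<in>{a..b}. of_real (Re (f x)) = (0::complex)"
    using C[unfolded chebyshev_def, rule_format, OF Re_in_Esol[OF ccL fE] real_valued_ofreal zero_data_Re[OF sf z] N] by blast
  moreover have "\<forall>x\<in>{a..b}. of_real (Im (f x)) = (0::complex)"
    using C[unfolded chebyshev_def, rule_format, OF Im_in_Esol[OF ccL fE] real_valued_ofreal zero_data_Im[OF sf z] N] by blast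
  ultimately show ?thesis by (simp add: complex_eq_iff)
qed

lemma Esol_zero_on_interval:
  assumes ab: "a < b" and fE: "f \<in> Esol L" and z: "\<forall>x\<in>{a..b}. f x = 0"
  shows "f = (\<lambda>x. 0)"
proof -
  have "\<forall>i<length L. (Dop ^^ i) f a = 0"
    using zero_on_Dk[OF Esol_smooth[OF fE] ab z] ab by auto
  then show ?thesis by (rule ode_uniq[OF fE])
qed

lemma chebyshev_global:
  assumes ab: "a < b" and g: "admissible a b L" and fE: "f \<in> Esol L"
    and oa: "flat f a i" and ob: "flat f b j" and N: "length L \<le> i + j"
  shows "f = (\<lambda>x. 0)"
proof -
  have "zero_data f a b i j {}" using oa ob by (simp add: zero_data_def)
  then have "\<forall>x\<in>{a..b}. f x = 0" using chebyshev_complex[OF ab g fE _ ] N by simp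
  then show ?thesis by (rule Esol_zero_on_interval[OF ab fE])
qed

section \<open>The Bernstein basis\<close>

definition bern_list :: "real \<Rightarrow> real \<Rightarrow> complex list \<Rightarrow> nat \<Rightarrow> real \<Rightarrow> complex" where
  "bern_list a b L k = (THE p. p \<in> Esol L \<and> zero_order p a k \<and> zero_order p b (length L - 1 - k)
      \<and> (Dop ^^ k) p a = 1)"

lemma bernstein_bern_list: "bernstein lam n a b k = bern_list a b (map lam [0..<Suc n]) k"
  by (simp add: bernstein_def bern_list_def ESpace_Esol)

lemma zero_order_flat: "zero_order f a k \<longleftrightarrow> flat f a k \<and> (Dop ^^ k) f a \<noteq> 0"
  by (simp add: zero_order_def flat_def)

lemma sum_split_sigma:
  fixes F :: "nat \<Rightarrow> 'a::comm_monoid_add"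
  assumes "p \<le> Suc m"
  shows "(\<Sum>j\<le>Suc m. F j) = F p + (\<Sum>i\<le>m. F (if i < p then i else Suc i))"
proof -
  define \<sigma> where "\<sigma> = (\<lambda>i::nat. if i < p then i else Suc i)"
  have inj: "inj_on \<sigma> {..m}" by (auto simp: inj_on_def \<sigma>_def split: if_splits)
  have "{..Suc m} = insert p (\<sigma> ` {..m})"
  proof (intro equalityI subsetI)
    fix j assume j: "j \<in> {..Suc m}"
    consider "j < p" | "j = p" | "p < j" by linarith
    then show "j \<in> insert p (\<sigma> ` {..m})"
    proof cases
      case 1 then have "j = \<sigma> j" "j \<le> m" using assms by (auto simp: \<sigma>_def)
      then show ?thesis by blast
    next
      case 3 then have "j = \<sigma> (j - 1)" "j - 1 \<le> m" using j by (auto simp: \<sigma>_def)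
      then show ?thesis by blast
    qed simp
  qed (use assms in \<open>auto simp: \<sigma>_def\<close>)
  moreover have "p \<notin> \<sigma> ` {..m}" by (auto simp: \<sigma>_def split: if_splits)
  ultimately have "(\<Sum>j\<le>Suc m. F j) = F p + sum F (\<sigma> ` {..m})" by simp
  also have "\<dots> = F p + (\<Sum>i\<le>m. F (\<sigma> i))" using sum.reindex[OF inj, of F] by simp
  finally show ?thesis by (simp add: \<sigma>_def)
qed

lemma kernel_pivot_step:
  fixes A :: "nat \<Rightarrow> nat \<Rightarrow> 'a::field"
  assumes p: "p \<le> Suc m" "A m p \<noteq> 0"
    and IH: "\<And>B :: nat \<Rightarrow> nat \<Rightarrow> 'a. \<exists>d. (\<exists>i\<le>m. d i \<noteq> 0) \<and> (\<forall>r<m. (\<Sum>i\<le>m. B r i * d i) = 0)"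
  shows "\<exists>c. (\<exists>i\<le>Suc m. c i \<noteq> 0) \<and> (\<forall>r<Suc m. (\<Sum>j\<le>Suc m. A r j * c j) = 0)"
proof -
  define \<sigma> where "\<sigma> = (\<lambda>i::nat. if i < p then i else Suc i)"
  define B where "B = (\<lambda>r i. A r (\<sigma> i) - A r p / A m p * A m (\<sigma> i))"
  obtain d where d: "\<exists>i\<le>m. d i \<noteq> 0" "\<forall>r<m. (\<Sum>i\<le>m. B r i * d i) = 0" using IH[of B] by blast
  define c where "c = (\<lambda>j. if j = p then - (\<Sum>i\<le>m. A m (\<sigma> i) * d i) / A m p
                            else d (if j < p then j else j - 1))"
  have c\<sigma>: "c (\<sigma> i) = d i" for i by (auto simp: c_def \<sigma>_def)
  have split: "(\<Sum>j\<le>Suc m. A r j * c j) = A r p * c p + (\<Sum>i\<le>m. A r (\<sigma> i) * d i)" for r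
    using sum_split_sigma[OF p(1), of "\<lambda>j. A r j * c j"] c\<sigma> by (simp add: \<sigma>_def)
  have "\<exists>i\<le>Suc m. c i \<noteq> 0"
  proof -
    obtain i where "i \<le> m" "d i \<noteq> 0" using d(1) by blast
    then show ?thesis using c\<sigma>[of i] by (intro exI[of _ "\<sigma> i"]) (auto simp: \<sigma>_def)
  qed
  moreover have "(\<Sum>j\<le>Suc m. A r j * c j) = 0" if r: "r < Suc m" for r
  proof (cases "r = m")
    case True
    then show ?thesis unfolding split using p(2) by (simp add: c_def)
  next
    case False
    have "(\<Sum>i\<le>m. B r i * d i) = (\<Sum>i\<le>m. A r (\<sigma> i) * d i) - A r p / A m p * (\<Sum>i\<le>m. A m (\<sigma> i) * d i)"
      by (simp add: B_def algebra_simps sum_subtractf sum_distrib_left)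
    then have "A r p * c p + (\<Sum>i\<le>m. A r (\<sigma> i) * d i) = (\<Sum>i\<le>m. B r i * d i)"
      by (simp add: c_def algebra_simps)
    then show ?thesis unfolding split using d(2) r False by simp
  qed
  ultimately show ?thesis by blast
qed

lemma kernel_exists:
  fixes A :: "nat \<Rightarrow> nat \<Rightarrow> 'a::field"
  shows "\<exists>c. (\<exists>i\<le>m. c i \<noteq> 0) \<and> (\<forall>r<m. (\<Sum>i\<le>m. A r i * c i) = 0)"
proof (induction m arbitrary: A)
  case 0 show ?case by (intro exI[of _ "\<lambda>_. 1"]) auto
next
  case (Suc m)
  show ?case
  proof (cases "\<forall>i\<le>Suc m. A m i = 0")
    case True
    obtain c where c: "\<exists>i\<le>m. c i \<noteq> 0" "\<forall>r<m. (\<Sum>i\<le>m. A r i * c i) = 0" using Suc.IH[of A] by blast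
    define c' where "c' = c(Suc m := 0)"
    have ext: "(\<Sum>i\<le>Suc m. A r i * c' i) = (\<Sum>i\<le>m. A r i * c i)" for r
    proof -
      have "(\<Sum>i\<le>m. A r i * c' i) = (\<Sum>i\<le>m. A r i * c i)" by (rule sum.cong) (auto simp: c'_def)
      then show ?thesis by (simp add: c'_def)
    qed
    have "(\<Sum>i\<le>Suc m. A r i * c' i) = 0" if "r < Suc m" for r
    proof (cases "r = m")
      case True
      then show ?thesis unfolding ext using \<open>\<forall>i\<le>Suc m. A m i = 0\<close> by simp
    qed (use that c(2) ext in simp)
    moreover have "\<exists>i\<le>Suc m. c' i \<noteq> 0"
    proof -
      obtain i where "i \<le> m" "c i \<noteq> 0" using c(1) by blast
      then show ?thesis by (intro exI[of _ i]) (simp add: c'_def)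
    qed
    ultimately show ?thesis by blast
  next
    case False
    then obtain p where "p \<le> Suc m" "A m p \<noteq> 0" by blast
    then show ?thesis by (rule kernel_pivot_step) (rule Suc.IH)
  qed
qed

lemma Esol_initial_basis:
  "\<exists>\<phi>. \<forall>r. \<phi> r \<in> Esol L \<and> (\<forall>i<length L. (Dop ^^ i) (\<phi> r) a = (if i = r then 1 else 0))"
proof -
  have "\<forall>r. \<exists>f. f \<in> Esol L \<and> (\<forall>i<length L. (Dop ^^ i) f a = (if i = r then 1 else 0))"
  proof
    fix r show "\<exists>f. f \<in> Esol L \<and> (\<forall>i<length L. (Dop ^^ i) f a = (if i = r then 1 else 0))"
      using ode_exist[of L a "\<lambda>i. if i = r then 1 else 0"] by blast
  qed
  then show ?thesis by (rule choice)
qed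

text \<open>Dimension count: the \<open>length L - k\<close> elements of the dual basis with index \<open>\<ge> k\<close> have a
  nontrivial combination satisfying the \<open>length L - 1 - k\<close> conditions at \<open>b\<close>.\<close>

lemma flat_element_exists:
  assumes k: "k < length L"
  shows "\<exists>f\<in>Esol L. f \<noteq> (\<lambda>x. 0) \<and> flat f a k \<and> flat f b (length L - 1 - k)"
proof -
  define n where "n = length L - 1"
  obtain \<phi> where \<phi>: "\<And>r. \<phi> r \<in> Esol L" "\<And>r i. i < length L \<Longrightarrow> (Dop ^^ i) (\<phi> r) a = (if i = r then 1 else 0)"
    using Esol_initial_basis[of L a] by blast
  define A where "A = (\<lambda>r i. (Dop ^^ r) (\<phi> (k + i)) b)"
  obtain c where c: "\<exists>i\<le>n - k. c i \<noteq> 0" "\<forall>r<n - k. (\<Sum>i\<le>n - k. A r i * c i) = 0"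
    using kernel_exists[of "n - k" A] by blast
  define f where "f = (\<lambda>x. \<Sum>i\<le>n - k. c i * \<phi> (k + i) x)"
  have fE: "f \<in> Esol L" unfolding f_def by (intro Esol_lincomb \<phi>) auto
  have Df: "(Dop ^^ l) f = (\<lambda>x. \<Sum>i\<le>n - k. c i * (Dop ^^ l) (\<phi> (k + i)) x)" for l
    unfolding f_def by (rule Dk_lincomb) (auto intro: Esol_smooth \<phi>)
  have oa: "flat f a k" unfolding flat_def
  proof (intro allI impI)
    fix l assume l: "l < k"
    then have "l < length L" using k by simp
    then show "(Dop ^^ l) f a = 0" unfolding Df using l \<phi>(2) by (auto intro!: sum.neutral)
  qed
  have ob: "flat f b (n - k)" unfolding flat_def Df using c(2) by (simp add: A_def mult.commute)
  obtain i0 where i0: "i0 \<le> n - k" "c i0 \<noteq> 0" using c(1) by blast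
  have "k + i0 < length L" using i0 k by (simp add: n_def)
  then have "(Dop ^^ (k + i0)) f a = (\<Sum>i\<le>n - k. c i * (if k + i0 = k + i then 1 else 0))"
    unfolding Df using \<phi>(2) by simp
  also have "\<dots> = (\<Sum>i\<le>n - k. (if i = i0 then c i else 0))" by (rule sum.cong) auto
  finally have "(Dop ^^ (k + i0)) f a \<noteq> 0" using i0 by (simp add: sum.delta)
  then have "f \<noteq> (\<lambda>x. 0)" by (auto simp: Dk_zero)
  then show ?thesis using fE oa ob by (auto simp: n_def)
qed

text \<open>By the Chebyshev property such an element has a zero of order exactly \<open>k\<close> at \<open>a\<close>.\<close>

lemma extremal_element_exists:
  assumes ab: "a < b" and g: "admissible a b L" and k: "k < length L"
  shows "\<exists>f\<in>Esol L. flat f a k \<and> flat f b (length L - 1 - k) \<and> (Dop ^^ k) f a \<noteq> 0"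
proof -
  obtain f where fE: "f \<in> Esol L" and fnz: "f \<noteq> (\<lambda>x. 0)" and oa: "flat f a k"
      and ob: "flat f b (length L - 1 - k)"
    using flat_element_exists[OF k] by blast
  have "(Dop ^^ k) f a \<noteq> 0"
  proof
    assume "(Dop ^^ k) f a = 0"
    then have "flat f a (Suc k)" using oa by (simp add: flat_def less_Suc_eq)
    then have "f = (\<lambda>x. 0)" using chebyshev_global[OF ab g fE _ ob] k by simp
    then show False using fnz by simp
  qed
  then show ?thesis using fE oa ob by blast
qed

text \<open>Two elements with the defining properties differ by an element with a zero of total order
  \<open>length L\<close>, hence coincide.\<close>

lemma bern_list_unique_aux:
  assumes ab: "a < b" and g: "admissible a b L" and k: "k < length L"
    and p: "p \<in> Esol L" "flat p a k" "flat p b (length L - 1 - k)" "(Dop ^^ k) p a = 1"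
    and q: "q \<in> Esol L" "flat q a k" "flat q b (length L - 1 - k)" "(Dop ^^ k) q a = 1"
  shows "p = q"
proof -
  define d where "d = (\<lambda>x. p x - q x)"
  have dE: "d \<in> Esol L" unfolding d_def by (rule Esol_diff[OF p(1) q(1)])
  have Dd: "(Dop ^^ l) d = (\<lambda>x. (Dop ^^ l) p x - (Dop ^^ l) q x)" for l
    unfolding d_def by (rule Dk_diff[OF Esol_smooth[OF p(1)] Esol_smooth[OF q(1)]])
  have "flat d a (Suc k)" using p(2,4) q(2,4) by (auto simp: flat_def Dd less_Suc_eq)
  moreover have "flat d b (length L - 1 - k)" using p(3) q(3) by (auto simp: flat_def Dd)
  ultimately have "d = (\<lambda>x. 0)" using chebyshev_global[OF ab g dE] k by simp
  then show ?thesis by (auto simp: d_def fun_eq_iff)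
qed

text \<open>Existence: normalise an element from \<open>extremal_element_exists\<close>; its zero at \<open>b\<close> has exact
  order \<open>length L - 1 - k\<close>, again by the Chebyshev property.\<close>

lemma bern_list_exists:
  assumes ab: "a < b" and g: "admissible a b L" and k: "k < length L"
  shows "\<exists>p. p \<in> Esol L \<and> zero_order p a k \<and> zero_order p b (length L - 1 - k) \<and> (Dop ^^ k) p a = 1"
proof -
  obtain f where fE: "f \<in> Esol L" and oa: "flat f a k" and ob: "flat f b (length L - 1 - k)"
      and fk: "(Dop ^^ k) f a \<noteq> 0"
    using extremal_element_exists[OF ab g k] by blast
  define p where "p = (\<lambda>x. (1 / (Dop ^^ k) f a) * f x)"
  have pE: "p \<in> Esol L" unfolding p_def by (rule Esol_cmult[OF fE])
  have Dp: "(Dop ^^ l) p = (\<lambda>x. (1 / (Dop ^^ k) f a) * (Dop ^^ l) f x)" for l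
    unfolding p_def by (rule Dk_cmult[OF Esol_smooth[OF fE]])
  have pa: "flat p a k" using oa by (simp add: flat_def Dp)
  have pb: "flat p b (length L - 1 - k)" using ob by (simp add: flat_def Dp)
  have pk: "(Dop ^^ k) p a = 1" using fk by (simp add: Dp)
  have "(Dop ^^ (length L - 1 - k)) p b \<noteq> 0"
  proof
    assume "(Dop ^^ (length L - 1 - k)) p b = 0"
    then have "flat p b (Suc (length L - 1 - k))" using pb by (simp add: flat_def less_Suc_eq)
    then have "p = (\<lambda>x. 0)" using chebyshev_global[OF ab g pE pa] k by simp
    then have "(Dop ^^ k) p a = 0" by (simp add: Dk_zero)
    then show False using pk by simp
  qed
  then show ?thesis using pE pa pb pk by (auto simp: zero_order_flat)
qed

text \<open>Hence the definite description defining \<open>bern_list\<close> is well defined.\<close>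

lemma bern_list_props:
  assumes ab: "a < b" and g: "admissible a b L" and k: "k < length L"
  shows "bern_list a b L k \<in> Esol L" "flat (bern_list a b L k) a k" "(Dop ^^ k) (bern_list a b L k) a = 1"
    "flat (bern_list a b L k) b (length L - 1 - k)" "(Dop ^^ (length L - 1 - k)) (bern_list a b L k) b \<noteq> 0"
proof -
  let ?P = "\<lambda>p. p \<in> Esol L \<and> zero_order p a k \<and> zero_order p b (length L - 1 - k) \<and> (Dop ^^ k) p a = 1"
  have ex1: "\<exists>!p. ?P p"
  proof (rule ex_ex1I)
    show "\<exists>p. ?P p" by (rule bern_list_exists[OF ab g k])
  next
    fix p q assume "?P p" "?P q"
    then show "p = q" using bern_list_unique_aux[OF ab g k] by (auto simp: zero_order_flat)
  qed
  have "?P (bern_list a b L k)" unfolding bern_list_def by (rule theI'[OF ex1])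
  then show "bern_list a b L k \<in> Esol L" "flat (bern_list a b L k) a k" "(Dop ^^ k) (bern_list a b L k) a = 1"
    "flat (bern_list a b L k) b (length L - 1 - k)" "(Dop ^^ (length L - 1 - k)) (bern_list a b L k) b \<noteq> 0"
    by (auto simp: zero_order_flat)
qed

lemma bern_list_unique:
  assumes ab: "a < b" and g: "admissible a b L" and k: "k < length L"
    and q: "q \<in> Esol L" "flat q a k" "flat q b (length L - 1 - k)" "(Dop ^^ k) q a = 1"
  shows "q = bern_list a b L k"
  using bern_list_unique_aux[OF ab g k q bern_list_props(1,2,4,3)[OF ab g k]] .

text \<open>The conjugate of a basis element has the same defining properties, so basis elements are real.\<close>

lemma bern_list_real:
  assumes ab: "a < b" and g: "admissible a b L" and k: "k < length L"
  shows "real_valued (bern_list a b L k)"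
proof -
  let ?p = "bern_list a b L k"
  have pE: "?p \<in> Esol L" by (rule bern_list_props[OF ab g k])
  have sp: "smooth_fun ?p" by (rule Esol_smooth[OF pE])
  have "(\<lambda>x. cnj (?p x)) \<in> Esol L" using g pE by (simp add: admissible_def cnj_closed_def)
  moreover have "flat (\<lambda>x. cnj (?p x)) a k" using bern_list_props(2)[OF ab g k] by (simp add: flat_def Dk_cnj[OF sp])
  moreover have "flat (\<lambda>x. cnj (?p x)) b (length L - 1 - k)" using bern_list_props(4)[OF ab g k] by (simp add: flat_def Dk_cnj[OF sp])
  moreover have "(Dop ^^ k) (\<lambda>x. cnj (?p x)) a = 1" using bern_list_props(3)[OF ab g k] by (simp add: Dk_cnj[OF sp])
  ultimately have "(\<lambda>x. cnj (?p x)) = ?p" by (rule bern_list_unique[OF ab g k])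
  then show ?thesis by (simp add: real_valued_cnj)
qed

lemma positive_near_left_end:
  "smooth_fun f \<Longrightarrow> real_valued f \<Longrightarrow> flat f a k \<Longrightarrow> Re ((Dop ^^ k) f a) > 0 \<Longrightarrow>
     \<exists>\<delta>>0. \<forall>x. a < x \<and> x < a + \<delta> \<longrightarrow> Re (f x) > 0"
proof (induction k arbitrary: f)
  case 0
  have "isCont (\<lambda>x. Re (f x)) a" by (rule DERIV_isCont[OF real_valued_deriv[OF smooth_diff[OF "0.prems"(1)]]])
  then have "((\<lambda>x. Re (f x)) \<longlongrightarrow> Re (f a)) (at a)" by (simp add: isCont_def)
  then have "eventually (\<lambda>x. 0 < Re (f x)) (at a)" using "0.prems"(4) by (intro order_tendstoD(1)) auto
  then obtain d where d: "d > 0" "\<And>x. x \<noteq> a \<Longrightarrow> dist x a < d \<Longrightarrow> 0 < Re (f x)"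
    by (auto simp: eventually_at)
  show ?case
  proof (intro exI[of _ d] conjI allI impI)
    fix x assume "a < x \<and> x < a + d"
    then show "0 < Re (f x)" using d(2)[of x] by (auto simp: dist_real_def)
  qed (use d in auto)
next
  case (Suc k)
  have sD: "smooth_fun (Dop f)" using smooth_Dop[OF Suc.prems(1)] .
  have rD: "real_valued (Dop f)" using real_valued_Dop[OF Suc.prems(1,2)] .
  have oD: "flat (Dop f) a k" using flat_Dop[OF Suc.prems(3)] by simp
  have pD: "Re ((Dop ^^ k) (Dop f) a) > 0" using Suc.prems(4) by (simp add: funpow_Dop_Suc del: funpow.simps)
  obtain \<delta> where \<delta>: "\<delta> > 0" "\<And>x. a < x \<Longrightarrow> x < a + \<delta> \<Longrightarrow> Re (Dop f x) > 0"
    using Suc.IH[OF sD rD oD pD] by blast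
  have fa: "f a = 0" using flat_imp_zero[OF Suc.prems(3)] by simp
  show ?case
  proof (intro exI[of _ \<delta>] conjI allI impI)
    fix x assume x: "a < x \<and> x < a + \<delta>"
    have cont: "continuous_on {a..x} (\<lambda>x. Re (f x))"
      by (intro continuous_at_imp_continuous_on ballI DERIV_isCont[OF real_valued_deriv[OF smooth_diff[OF Suc.prems(1)]]])
    have dif: "(\<lambda>x. Re (f x)) differentiable (at y)" for y
      using real_valued_deriv[OF smooth_diff[OF Suc.prems(1)]] by (metis real_differentiable_def)
    obtain l z where lz: "a < z" "z < x" "DERIV (\<lambda>x. Re (f x)) z :> l" "Re (f x) - Re (f a) = (x - a) * l"
      using MVT[OF _ cont dif] x by blast
    have "l = Re (Dop f z)" using DERIV_unique[OF lz(3) real_valued_deriv[OF smooth_diff[OF Suc.prems(1)]]] .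
    then have "l > 0" using \<delta>(2)[of z] lz x by simp
    then show "0 < Re (f x)" using lz(4) fa x by simp
  qed (use \<delta> in auto)
qed

text \<open>Basis elements are positive on \<open>(a,b)\<close>: they are positive near \<open>a\<close> and an interior zero would
  give \<open>length L\<close> zeros.\<close>

lemma bern_list_pos:
  assumes ab: "a < b" and g: "admissible a b L" and k: "k < length L" and x: "x \<in> {a<..<b}"
  shows "Re (bern_list a b L k x) > 0"
proof -
  let ?p = "bern_list a b L k"
  have pE: "?p \<in> Esol L" and pa: "flat ?p a k" and pk: "(Dop ^^ k) ?p a = 1" and pb: "flat ?p b (length L - 1 - k)"
    using bern_list_props[OF ab g k] by auto
  have sp: "smooth_fun ?p" using Esol_smooth[OF pE] .
  have rp: "real_valued ?p" by (rule bern_list_real[OF ab g k])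
  have nz: "Re (?p z) \<noteq> 0" if z: "z \<in> {a<..<b}" for z
  proof
    assume "Re (?p z) = 0"
    then have pz: "?p z = 0" using rp by (simp add: real_valued_def complex_eq_iff)
    have "zero_data ?p a b k (length L - 1 - k) {z}" using pa pb z pz by (simp add: zero_data_def)
    then have "\<forall>x\<in>{a..b}. ?p x = 0" using chebyshev_complex[OF ab g pE] k by simp
    then have "?p = (\<lambda>x. 0)" by (rule Esol_zero_on_interval[OF ab pE])
    then show False using pk by (simp add: Dk_zero)
  qed
  obtain \<delta> where \<delta>: "\<delta> > 0" "\<And>x. a < x \<Longrightarrow> x < a + \<delta> \<Longrightarrow> Re (?p x) > 0"
    using positive_near_left_end[OF sp rp pa] pk by auto
  show ?thesis
  proof (rule ccontr)
    assume "\<not> Re (?p x) > 0"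
    then have neg: "Re (?p x) \<le> 0" by simp
    define y where "y = a + min \<delta> (x - a) / 2"
    have y: "a < y" "y < x" "y < a + \<delta>" using \<delta>(1) x by (auto simp: y_def min_def field_simps)
    have py: "Re (?p y) > 0" using \<delta>(2) y by simp
    have cont: "continuous_on {y..x} (\<lambda>x. Re (?p x))"
      by (intro continuous_at_imp_continuous_on ballI DERIV_isCont[OF real_valued_deriv[OF smooth_diff[OF sp]]])
    obtain z where z: "y \<le> z" "z \<le> x" "Re (?p z) = 0"
      using IVT2'[of "\<lambda>x. Re (?p x)" x 0 y, OF neg _ _ cont] py y by auto
    have "z \<in> {a<..<b}" using z y x by auto
    then show False using nz z(3) by blast
  qed
qed

text \<open>Spanning: matching the derivatives at \<open>a\<close> one order at a time, since the \<open>m\<close>-th basis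
  element is the first one with a nonzero \<open>m\<close>-th derivative at \<open>a\<close>.\<close>

lemma bern_list_match_derivatives:
  assumes ab: "a < b" and g: "admissible a b L"
  shows "m \<le> length L \<Longrightarrow> \<exists>c. \<forall>i<m. (Dop ^^ i) (\<lambda>x. \<Sum>k<m. c k * bern_list a b L k x) a = v i"
proof (induction m)
  case (Suc m)
  let ?p = "bern_list a b L"
  have sp: "\<And>k. k < length L \<Longrightarrow> smooth_fun (?p k)" using bern_list_props(1)[OF ab g] Esol_smooth by blast
  obtain c where c: "\<forall>i<m. (Dop ^^ i) (\<lambda>x. \<Sum>k<m. c k * ?p k x) a = v i"
    using Suc by auto
  have mL: "m < length L" using Suc.prems by simp
  define r where "r = v m - (Dop ^^ m) (\<lambda>x. \<Sum>k<m. c k * ?p k x) a"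
  define c' where "c' = c(m := r)"
  have e: "(\<lambda>x. \<Sum>k<Suc m. c' k * ?p k x) = (\<lambda>x. (\<Sum>k<m. c k * ?p k x) + r * ?p m x)"
  proof
    fix x
    have "(\<Sum>k<m. c' k * ?p k x) = (\<Sum>k<m. c k * ?p k x)" by (rule sum.cong) (auto simp: c'_def)
    then show "(\<Sum>k<Suc m. c' k * ?p k x) = (\<Sum>k<m. c k * ?p k x) + r * ?p m x"
      by (simp add: c'_def)
  qed
  have s1: "smooth_fun (\<lambda>x. \<Sum>k<m. c k * ?p k x)" using sp mL by (intro smooth_lincomb) auto
  have D: "(Dop ^^ i) (\<lambda>x. \<Sum>k<Suc m. c' k * ?p k x) a
      = (Dop ^^ i) (\<lambda>x. \<Sum>k<m. c k * ?p k x) a + r * (Dop ^^ i) (?p m) a" for i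
    unfolding e using s1 sp[OF mL] by (simp add: Dk_add smooth_cmult Dk_cmult)
  have om: "flat (?p m) a m" and pm: "(Dop ^^ m) (?p m) a = 1" using bern_list_props[OF ab g mL] by auto
  have "(Dop ^^ i) (\<lambda>x. \<Sum>k<Suc m. c' k * ?p k x) a = v i" if i: "i < Suc m" for i
  proof (cases "i < m")
    case True then show ?thesis unfolding D using c om by (simp add: flat_def)
  next
    case False then have "i = m" using i by simp
    then show ?thesis unfolding D using pm by (simp add: r_def)
  qed
  then show ?case by blast
qed simp

lemma bern_list_spans:
  assumes ab: "a < b" and g: "admissible a b L" and fE: "f \<in> Esol L"
  shows "\<exists>c. \<forall>x. f x = (\<Sum>k<length L. c k * bern_list a b L k x)"
proof -
  let ?p = "bern_list a b L"
  have sp: "\<And>k. k < length L \<Longrightarrow> smooth_fun (?p k)" using bern_list_props(1)[OF ab g] Esol_smooth by blast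
  obtain c where c: "\<forall>i<length L. (Dop ^^ i) (\<lambda>x. \<Sum>k<length L. c k * ?p k x) a = (Dop ^^ i) f a"
    using bern_list_match_derivatives[OF ab g order.refl, of "\<lambda>i. (Dop ^^ i) f a"] by blast
  define h where "h = (\<lambda>x. f x - (\<Sum>k<length L. c k * ?p k x))"
  have hE: "h \<in> Esol L" unfolding h_def
    by (intro Esol_diff fE Esol_lincomb) (auto intro: bern_list_props(1)[OF ab g])
  have s1: "smooth_fun (\<lambda>x. \<Sum>k<length L. c k * ?p k x)" using sp by (intro smooth_lincomb) auto
  have "\<forall>i<length L. (Dop ^^ i) h a = 0"
    using c unfolding h_def by (simp add: Dk_diff[OF Esol_smooth[OF fE] s1])
  then have "h = (\<lambda>x. 0)" by (rule ode_uniq[OF hE])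
  then show ?thesis by (auto simp: h_def fun_eq_iff)
qed

text \<open>Linear independence on \<open>[a,b]\<close>: the derivatives at \<open>a\<close> form a triangular system.\<close>

lemma bern_list_independent:
  assumes ab: "a < b" and g: "admissible a b L" and z: "\<forall>x\<in>{a..b}. (\<Sum>k<length L. c k * bern_list a b L k x) = 0"
  shows "\<forall>k<length L. c k = 0"
proof -
  let ?p = "bern_list a b L"
  have sp: "\<And>k. k < length L \<Longrightarrow> smooth_fun (?p k)" using bern_list_props(1)[OF ab g] Esol_smooth by blast
  define h where "h = (\<lambda>x. \<Sum>k<length L. c k * ?p k x)"
  have sh: "smooth_fun h" unfolding h_def using sp by (intro smooth_lincomb) auto
  have Dh: "(Dop ^^ i) h a = (\<Sum>k<length L. c k * (Dop ^^ i) (?p k) a)" for i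
    unfolding h_def using Dk_lincomb[of "{..<length L}" ?p i c] sp by simp
  have h0: "(Dop ^^ i) h a = 0" for i using zero_on_Dk[OF sh ab] z ab by (auto simp: h_def)
  have "c i = 0" if "i < length L" for i
    using that
  proof (induction i rule: less_induct)
    case (less i)
    have "(\<Sum>k<length L. c k * (Dop ^^ i) (?p k) a) = (\<Sum>k<length L. if k = i then c i else 0)"
    proof (rule sum.cong)
      fix k assume k: "k \<in> {..<length L}"
      show "c k * (Dop ^^ i) (?p k) a = (if k = i then c i else 0)"
      proof (cases "k < i")
        case True then show ?thesis using less.IH less.prems by simp
      next
        case False
        show ?thesis
        proof (cases "k = i")
          case True then show ?thesis using bern_list_props(3)[OF ab g] k by simp
        next
          case False then have "i < k" using \<open>\<not> k < i\<close> by simp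
          then show ?thesis using bern_list_props(2)[OF ab g] k False by (simp add: flat_def)
        qed
      qed
    qed simp
    also have "\<dots> = c i" using less.prems by (simp add: sum.delta)
    finally show ?case using Dh[of i] h0[of i] by simp
  qed
  then show ?thesis by blast
qed

section \<open>Expansions in the Bernstein basis\<close>

lemma bern_list_coeff_unique:
  assumes ab: "a < b" and g: "admissible a b L" and len: "length L = Suc n"
    and eq: "\<forall>x\<in>{a..b}. (\<Sum>k\<le>n. e k * bern_list a b L k x) = (\<Sum>k\<le>n. c k * bern_list a b L k x)"
  shows "\<forall>k\<le>n. e k = c k"
proof -
  have "\<forall>x\<in>{a..b}. (\<Sum>k<length L. (e k - c k) * bern_list a b L k x) = 0"
    using eq by (simp add: len lessThan_Suc_atMost left_diff_distrib sum_subtractf)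
  then have "\<forall>k<length L. e k - c k = 0" by (rule bern_list_independent[OF ab g])
  then show ?thesis using len by (simp add: less_Suc_eq_le)
qed

lemma bern_list_expansion:
  assumes ab: "a < b" and g: "admissible a b L" and fE: "f \<in> Esol L" and len: "length L = Suc n"
  shows "\<exists>c. \<forall>x. f x = (\<Sum>k\<le>n. c k * bern_list a b L k x)"
  using bern_list_spans[OF ab g fE] len by (simp add: lessThan_Suc_atMost)

lemma real_coefficients:
  assumes ab: "a < b" and g: "admissible a b L" and len: "length L = Suc n" and rF: "real_valued F"
    and rep: "\<forall>x. F x = (\<Sum>k\<le>n. c k * bern_list a b L k x)"
  shows "\<forall>k\<le>n. Im (c k) = 0"
proof -
  have pr: "cnj (bern_list a b L k x) = bern_list a b L k x" if "k \<le> n" for k x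
    using bern_list_real[OF ab g, of k] that len by (simp add: real_valued_def complex_eq_iff)
  have "(\<Sum>k\<le>n. cnj (c k) * bern_list a b L k x) = (\<Sum>k\<le>n. c k * bern_list a b L k x)" for x
  proof -
    have "(\<Sum>k\<le>n. cnj (c k) * bern_list a b L k x) = cnj (F x)"
      unfolding rep[rule_format] by (simp add: pr)
    also have "\<dots> = F x" using rF by (simp add: real_valued_def complex_eq_iff)
    finally show ?thesis using rep by simp
  qed
  then have "\<forall>k\<le>n. cnj (c k) = c k" by (intro bern_list_coeff_unique[OF ab g len] ballI)
  then show ?thesis by (simp add: complex_eq_iff)
qed

lemma decrease_imp_negative_derivative:
  fixes G :: "real \<Rightarrow> real"
  assumes ab: "a < b" and G: "\<And>x. (G has_real_derivative G' x) (at x)" and dec: "G b < G a"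
  shows "\<exists>z\<in>{a<..<b}. G' z < 0"
proof -
  have "continuous_on {a..b} G" by (intro continuous_at_imp_continuous_on ballI DERIV_isCont[OF G])
  moreover have "G differentiable (at x)" for x using G by (metis real_differentiable_def)
  ultimately obtain l z where z: "a < z" "z < b" "DERIV G z :> l" "G b - G a = (b - a) * l"
    using MVT[OF ab] by blast
  have "l = G' z" using DERIV_unique[OF z(3) G] .
  moreover have "(b - a) * l < 0" using z(4) dec by simp
  ultimately show ?thesis using ab z(1,2) by (auto simp: mult_less_0_iff)
qed

lemma abel_summation:
  fixes t s :: "nat \<Rightarrow> complex"
  shows "(\<Sum>k\<le>n. t k * (s k - (if k = 0 then 0 else s (k - 1)))) = t n * s n + (\<Sum>k<n. (t k - t (Suc k)) * s k)"
  by (induction n) (simp_all add: algebra_simps)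

lemma Re_hasder: "(g has_vector_derivative d) (at x) \<Longrightarrow> ((\<lambda>x. Re (g x)) has_real_derivative Re d) (at x)"
  unfolding has_real_derivative_iff_has_vector_derivative
  by (rule bounded_linear.has_vector_derivative[OF bounded_linear_Re])

text \<open>We show that all \<open>c\<^sub>k\<close> are positive.\<close>

locale exp_expansion =
  fixes a b :: real and \<mu> :: complex and L' :: "complex list" and c :: "nat \<Rightarrow> complex"
  assumes ab: "a < b" and adm: "admissible a b (\<mu> # L')" and mr: "Im \<mu> = 0"
    and rep: "\<forall>x. expf \<mu> x = (\<Sum>k\<le>length L'. c k * bern_list a b (\<mu> # L') k x)"
begin

abbreviation "n \<equiv> length L'"
abbreviation "p \<equiv> bern_list a b (\<mu> # L')"
abbreviation "q \<equiv> bern_list a b L'"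

lemma adm_tail: "admissible a b L'"
proof -
  have "cnj_closed (remove1 \<mu> (\<mu> # L'))" using cnj_closed_remove_real[of "\<mu> # L'" \<mu>, OF _ _ mr] adm by (simp add: admissible_def)
  then show ?thesis using adm by (simp add: admissible_def)
qed

lemma p_props: assumes "k \<le> n"
  shows "p k \<in> Esol (\<mu> # L')" "flat (p k) a k" "(Dop ^^ k) (p k) a = 1"
    "flat (p k) b (n - k)" "(Dop ^^ (n - k)) (p k) b \<noteq> 0" "real_valued (p k)" "smooth_fun (p k)"
  using bern_list_props[OF ab adm, of k] bern_list_real[OF ab adm, of k] assms Esol_smooth by auto

lemma c_real: "k \<le> n \<Longrightarrow> Im (c k) = 0"
  using real_coefficients[OF ab adm _ real_valued_expf[OF mr] rep] by simp

lemma p_a: "k \<le> n \<Longrightarrow> p k a = (if k = 0 then 1 else 0)"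
  using p_props(3)[of k] flat_imp_zero[OF p_props(2)[of k]] by (cases k) auto

lemma p_b: "k < n \<Longrightarrow> p k b = 0"
  using flat_imp_zero[OF p_props(4)[of k]] by simp

lemma c0: "c 0 = expf \<mu> a"
proof -
  have "expf \<mu> a = (\<Sum>k\<le>n. c k * p k a)" using rep by simp
  also have "\<dots> = (\<Sum>k\<le>n. if k = 0 then c 0 else 0)" by (rule sum.cong) (auto simp: p_a)
  finally show ?thesis by simp
qed

text \<open>Since \<open>(D - \<mu>) exp (\<mu> x) = 0\<close>, it equals minus
  the tail sum over \<open>j > k\<close>, so it lies in \<open>Esol L'\<close> with zeros of order \<open>k\<close> at \<open>a\<close> and
  \<open>n - 1 - k\<close> at \<open>b\<close>: it is a multiple \<open>\<sigma> k\<close> of the basis element \<open>q k\<close>.\<close>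

definition Dsum :: "nat \<Rightarrow> real \<Rightarrow> complex" where
  "Dsum k = (\<lambda>x. \<Sum>j\<le>k. c j * Dminus \<mu> (p j) x)"

lemma Dminus_p_Esol: "j \<le> n \<Longrightarrow> Dminus \<mu> (p j) \<in> Esol L'"
  using p_props(1) Esol_Cons by blast

lemma Dminus_p_smooth: "j \<le> n \<Longrightarrow> smooth_fun (Dminus \<mu> (p j))"
  using smooth_Dminus p_props(7) by blast

lemma Dminus_sum_zero: "(\<lambda>x. \<Sum>j\<le>n. c j * Dminus \<mu> (p j) x) = (\<lambda>x. 0)"
proof -
  have "Dminus \<mu> (\<lambda>x. \<Sum>j\<le>n. c j * p j x) = (\<lambda>x. \<Sum>j\<le>n. c j * Dminus \<mu> (p j) x)"
    by (rule Dminus_lincomb) (auto intro: p_props(7))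
  moreover have "(\<lambda>x. \<Sum>j\<le>n. c j * p j x) = expf \<mu>" using rep by auto
  ultimately show ?thesis by (simp add: Dminus_expf)
qed

lemma Dsum_tail: assumes "k \<le> n" shows "Dsum k = (\<lambda>x. - (\<Sum>j\<in>{k<..n}. c j * Dminus \<mu> (p j) x))"
proof
  fix x
  have "{..n} = {..k} \<union> {k<..n}" using assms by auto
  then have "(\<Sum>j\<le>n. c j * Dminus \<mu> (p j) x) = (\<Sum>j\<le>k. c j * Dminus \<mu> (p j) x) + (\<Sum>j\<in>{k<..n}. c j * Dminus \<mu> (p j) x)"
    by (simp add: sum.union_disjoint ivl_disj_int)
  then show "Dsum k x = - (\<Sum>j\<in>{k<..n}. c j * Dminus \<mu> (p j) x)"
    using fun_cong[OF Dminus_sum_zero, of x] by (simp add: Dsum_def eq_neg_iff_add_eq_0 add.commute)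
qed

lemma Dsum_Esol: "k \<le> n \<Longrightarrow> Dsum k \<in> Esol L'"
  unfolding Dsum_def by (intro Esol_lincomb Dminus_p_Esol) auto

lemma Dsum_smooth: "k \<le> n \<Longrightarrow> smooth_fun (Dsum k)"
  using Dsum_Esol Esol_smooth by blast

lemma Dsum_flat_a: assumes "k \<le> n" shows "flat (Dsum k) a k"
proof -
  have "flat (\<lambda>x. \<Sum>j\<in>{k<..n}. c j * Dminus \<mu> (p j) x) a k"
  proof (rule flat_lincomb)
    fix j assume j: "j \<in> {k<..n}"
    show "smooth_fun (Dminus \<mu> (p j))" using j Dminus_p_smooth by auto
    have "flat (Dminus \<mu> (p j)) a (j - 1)" using j by (intro flat_Dminus p_props) auto
    then show "flat (Dminus \<mu> (p j)) a k" using j by (elim flat_mono) auto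
  qed auto
  then show ?thesis unfolding Dsum_tail[OF assms]
    by (intro flat_uminus smooth_lincomb) (auto intro: Dminus_p_smooth)
qed

lemma Dsum_flat_b: assumes "k \<le> n" shows "flat (Dsum k) b (n - 1 - k)"
  unfolding Dsum_def
proof (rule flat_lincomb)
  fix j assume j: "j \<in> {..k}"
  show "smooth_fun (Dminus \<mu> (p j))" using j assms Dminus_p_smooth by auto
  have "flat (Dminus \<mu> (p j)) b (n - j - 1)" using j assms by (intro flat_Dminus p_props) auto
  then show "flat (Dminus \<mu> (p j)) b (n - 1 - k)" using j by (elim flat_mono) auto
qed auto

definition \<sigma> :: "nat \<Rightarrow> complex" where "\<sigma> k = (Dop ^^ k) (Dsum k) a"

lemma q_props: assumes "k < n"
  shows "q k \<in> Esol L'" "flat (q k) a k" "(Dop ^^ k) (q k) a = 1"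
    "flat (q k) b (n - 1 - k)" "real_valued (q k)" "smooth_fun (q k)"
  using bern_list_props[OF ab adm_tail, of k] bern_list_real[OF ab adm_tail, of k] assms Esol_smooth by auto

lemma Dsum_eq: assumes "k < n" shows "Dsum k = (\<lambda>x. \<sigma> k * q k x)"
proof -
  define d where "d = (\<lambda>x. Dsum k x - \<sigma> k * q k x)"
  have dE: "d \<in> Esol L'" unfolding d_def using assms by (intro Esol_diff Dsum_Esol Esol_cmult q_props) auto
  have sS: "smooth_fun (Dsum k)" using assms Dsum_smooth by simp
  have sq: "smooth_fun (\<lambda>x. \<sigma> k * q k x)" using assms by (intro smooth_cmult q_props)
  have Dd: "(Dop ^^ l) d = (\<lambda>x. (Dop ^^ l) (Dsum k) x - \<sigma> k * (Dop ^^ l) (q k) x)" for l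
    unfolding d_def Dk_diff[OF sS sq] Dk_cmult[OF q_props(6)[OF assms]] ..
  have "flat d a (Suc k)"
    using Dsum_flat_a[of k] q_props(2,3)[OF assms] assms unfolding flat_def Dd
    by (auto simp: less_Suc_eq \<sigma>_def)
  moreover have "flat d b (n - 1 - k)"
    using Dsum_flat_b[of k] q_props(4)[OF assms] assms unfolding flat_def Dd by auto
  ultimately have "d = (\<lambda>x. 0)" using chebyshev_global[OF ab adm_tail dE] assms by simp
  then show ?thesis by (auto simp: d_def fun_eq_iff)
qed

text \<open>Comparing \<open>k\<close>-th derivatives at \<open>a\<close> gives \<open>c (k + 1) = - \<sigma> k\<close>.\<close>

lemma c_succ: assumes "k < n" shows "c (Suc k) = - \<sigma> k"
proof -
  have e: "Dsum (Suc k) = (\<lambda>x. Dsum k x + c (Suc k) * Dminus \<mu> (p (Suc k)) x)" by (simp add: Dsum_def)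
  have "(Dop ^^ k) (Dsum (Suc k)) a = 0" using Dsum_flat_a[of "Suc k"] assms by (simp add: flat_def)
  moreover have "(Dop ^^ k) (Dsum (Suc k)) a = \<sigma> k + c (Suc k) * (Dop ^^ k) (Dminus \<mu> (p (Suc k))) a"
    unfolding e using assms
    by (simp add: Dk_add Dsum_smooth smooth_cmult Dminus_p_smooth Dk_cmult \<sigma>_def del: funpow.simps)
  moreover have "(Dop ^^ k) (Dminus \<mu> (p (Suc k))) a = 1"
    using p_props(2,3)[of "Suc k"] assms by (simp add: Dk_Dminus p_props(7) flat_def del: funpow.simps)
  ultimately show ?thesis by (simp add: eq_neg_iff_add_eq_0 add.commute)
qed

lemma Dsum_real: assumes "k \<le> n" shows "real_valued (Dsum k)"
proof -
  have r: "Im (Dminus \<mu> (p j) x) = 0" if "j \<le> n" for j x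
    using real_valued_Dminus[OF p_props(7) p_props(6) mr, of j] that by (simp add: real_valued_def)
  show ?thesis unfolding Dsum_def real_valued_def Im_sum
    using r c_real assms by (auto intro!: sum.neutral)
qed

lemma \<sigma>_real: "k \<le> n \<Longrightarrow> Im (\<sigma> k) = 0"
  using real_valued_Dk[OF Dsum_smooth Dsum_real] by (simp add: \<sigma>_def real_valued_def)

text \<open>\<open>\<sigma> k < 0\<close>: the function \<open>G = exp (-\<mu> x) \<Sum>\<^bsub>j\<le>k\<^esub> c\<^sub>j p\<^sub>j\<close> drops from \<open>1\<close> at \<open>a\<close> to \<open>0\<close> at \<open>b\<close>,
  while \<open>G' = exp (-\<mu> x) \<sigma> k q k\<close> with \<open>q k > 0\<close> on \<open>(a,b)\<close>.\<close>

lemma \<sigma>_neg: assumes k: "k < n" shows "Re (\<sigma> k) < 0"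
proof -
  define F where "F = (\<lambda>x. \<Sum>j\<le>k. c j * p j x)"
  have sF: "smooth_fun F" unfolding F_def using k by (intro smooth_lincomb) (auto intro: p_props(7))
  have TF: "Dminus \<mu> F = Dsum k" unfolding F_def Dsum_def using k by (intro Dminus_lincomb) (auto intro: p_props(7))
  define G where "G = (\<lambda>x. expf (-\<mu>) x * F x)"
  have Gd: "(G has_vector_derivative expf (-\<mu>) x * (\<sigma> k * q k x)) (at x)" for x
    using expf_mult_Dminus[OF sF, of \<mu> x] TF Dsum_eq[OF k] unfolding G_def by simp
  have Re_G': "Re (expf (-\<mu>) x * (\<sigma> k * q k x)) = exp (- Re \<mu> * x) * (Re (\<sigma> k) * Re (q k x))" for x
    using \<sigma>_real[of k] q_props(5)[OF k] k mr expf_real[of "-\<mu>" x] by (simp add: real_valued_def)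
  have G': "((\<lambda>x. Re (G x)) has_real_derivative exp (- Re \<mu> * x) * (Re (\<sigma> k) * Re (q k x))) (at x)" for x
    using Re_hasder[OF Gd[of x]] unfolding Re_G' .
  have "F a = (\<Sum>j\<le>k. if j = 0 then c 0 else 0)" unfolding F_def
    using k by (intro sum.cong) (auto simp: p_a)
  then have "G a = 1" using expf_neg[of "\<mu>" a] by (simp add: G_def c0 mult.commute)
  moreover have "G b = 0" using k by (simp add: G_def F_def p_b)
  ultimately obtain z where z: "z \<in> {a<..<b}" "exp (- Re \<mu> * z) * (Re (\<sigma> k) * Re (q k z)) < 0"
    using decrease_imp_negative_derivative[OF ab G'] by auto
  moreover have "Re (q k z) > 0" using bern_list_pos[OF ab adm_tail] k z(1) by simp
  ultimately show ?thesis by (simp add: mult_less_0_iff)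
qed

lemma c_pos: assumes "k \<le> n" shows "Re (c k) > 0"
proof (cases k)
  case 0 then show ?thesis using mr by (simp add: c0 expf_real)
next
  case (Suc k') then show ?thesis using c_succ[of k'] \<sigma>_neg[of k'] assms by simp
qed

lemma c_ofreal: "k \<le> n \<Longrightarrow> c k = of_real (Re (c k))"
  using c_real by (simp add: complex_eq_iff)

lemma Dminus_expansion_by_parts:
  assumes dt: "\<And>k. k \<le> n \<Longrightarrow> d k = of_real (t k) * c k"
  shows "(\<Sum>k\<le>n. d k * Dminus \<mu> (p k) x) = (\<Sum>k<n. (of_real (t k - t (Suc k)) * \<sigma> k) * q k x)"
proof -
  have cTp: "c k * Dminus \<mu> (p k) x = Dsum k x - (if k = 0 then 0 else Dsum (k - 1) x)" for k
    by (cases k) (simp_all add: Dsum_def)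
  have "(\<Sum>k\<le>n. d k * Dminus \<mu> (p k) x)
      = (\<Sum>k\<le>n. of_real (t k) * (Dsum k x - (if k = 0 then 0 else Dsum (k - 1) x)))"
    by (rule sum.cong) (auto simp: dt cTp[symmetric] mult.assoc)
  also have "\<dots> = of_real (t n) * Dsum n x + (\<Sum>k<n. (of_real (t k) - of_real (t (Suc k))) * Dsum k x)"
    by (rule abel_summation)
  also have "\<dots> = (\<Sum>k<n. (of_real (t k) - of_real (t (Suc k))) * Dsum k x)"
    using fun_cong[OF Dminus_sum_zero, of x] by (simp add: Dsum_def)
  also have "\<dots> = (\<Sum>k<n. (of_real (t k - t (Suc k)) * \<sigma> k) * q k x)"
    by (rule sum.cong) (auto simp: Dsum_eq)
  finally show ?thesis .
qed

end

section \<open>The nodes and weights\<close>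

locale node_data = exp_expansion a b \<mu> "\<mu> # L''" c for a b \<mu> L'' c +
  fixes d :: "nat \<Rightarrow> complex"
  assumes rep_x: "\<forall>x. xexpf \<mu> x = (\<Sum>k\<le>Suc (length L''). d k * bern_list a b (\<mu> # \<mu> # L'') k x)"
begin

definition node :: "nat \<Rightarrow> real" where
  "node k = Re (d k) / Re (c k)"

definition weight :: "nat \<Rightarrow> real" where
  "weight k = Re (c k) * exp (- (Re \<mu> * node k))"

lemma d_eq: assumes "k \<le> n" shows "d k = of_real (node k) * c k"
proof -
  have "real_valued (xexpf \<mu>)" unfolding xexpf_def by (intro real_valued_mult real_valued_ofreal real_valued_expf mr)
  then have "Im (d k) = 0" using real_coefficients[OF ab adm _ _ rep_x] assms by simp
  then show ?thesis using c_pos[OF assms] c_real[OF assms] by (simp add: node_def complex_eq_iff)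
qed

text \<open>Applying \<open>D - \<mu>\<close> to the expansion of \<open>x exp (\<mu> x)\<close> and summing by parts expands
  \<open>exp (\<mu> x)\<close> in the basis \<open>q\<close> with coefficients \<open>(t\<^sub>k - t\<^sub>k\<^sub>+\<^sub>1) \<sigma>\<^sub>k\<close>; these are positive
  by \<open>c_pos\<close> for the smaller list, while \<open>\<sigma>\<^sub>k < 0\<close>.  So the nodes increase strictly.\<close>

lemma node_strict_mono: assumes k: "k < n" shows "node k < node (Suc k)"
proof -
  have lenq: "length (\<mu> # L'') = Suc (length L'')" by simp
  obtain e where e: "\<forall>x. expf \<mu> x = (\<Sum>k\<le>length L''. e k * q k x)"
    using bern_list_expansion[OF ab adm_tail expf_in_Esol[of \<mu>] lenq] by auto
  interpret E: exp_expansion a b \<mu> L'' e using ab adm_tail mr e by unfold_locales auto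
  have "(\<Sum>k\<le>n. d k * Dminus \<mu> (p k) x) = expf \<mu> x" for x
  proof -
    have "Dminus \<mu> (\<lambda>x. \<Sum>k\<le>n. d k * p k x) = (\<lambda>x. \<Sum>k\<le>n. d k * Dminus \<mu> (p k) x)"
      by (rule Dminus_lincomb) (auto intro: p_props(7))
    moreover have "(\<lambda>x. \<Sum>k\<le>n. d k * p k x) = xexpf \<mu>" using rep_x by auto
    ultimately show ?thesis using Dminus_xexpf by metis
  qed
  then have "\<forall>x\<in>{a..b}. (\<Sum>k\<le>length L''. (of_real (node k - node (Suc k)) * \<sigma> k) * q k x)
      = (\<Sum>k\<le>length L''. e k * q k x)"
    using e Dminus_expansion_by_parts[OF d_eq] by (simp add: lessThan_Suc_atMost)
  then have "\<forall>j\<le>length L''. of_real (node j - node (Suc j)) * \<sigma> j = e j"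
    by (rule bern_list_coeff_unique[OF ab adm_tail lenq])
  then have "of_real (node k - node (Suc k)) * \<sigma> k = e k" using k by simp
  from arg_cong[OF this, of Re] have "(node k - node (Suc k)) * Re (\<sigma> k) = Re (e k)" by simp
  moreover have "Re (e k) > 0" using E.c_pos k by simp
  ultimately have "0 < (node k - node (Suc k)) * Re (\<sigma> k)" by simp
  moreover have "Re (\<sigma> k) < 0" using \<sigma>_neg k by simp
  ultimately show ?thesis by (auto simp: zero_less_mult_iff)
qed

text \<open>The end nodes: evaluating the two expansions at \<open>a\<close> and at \<open>b\<close>, where only the first,
  respectively the last, basis element is nonzero.\<close>

lemma node_ends: "node 0 = a" "node n = b"
proof -
  have "xexpf \<mu> a = (\<Sum>k\<le>n. d k * p k a)" using rep_x by simp
  also have "\<dots> = (\<Sum>k\<le>n. if k = 0 then d 0 else 0)" by (rule sum.cong) (auto simp: p_a)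
  finally have "d 0 = of_real a * c 0" by (simp add: xexpf_def c0)
  then show "node 0 = a" using c_pos[of 0] by (simp add: node_def)
next
  have pb: "p k b = 0" if "k \<le> n" "k \<noteq> n" for k using p_b that by simp
  have "xexpf \<mu> b = (\<Sum>k\<le>n. d k * p k b)" using rep_x by simp
  also have "\<dots> = (\<Sum>k\<le>n. if k = n then d n * p n b else 0)" by (rule sum.cong) (auto simp: pb)
  finally have 1: "of_real b * expf \<mu> b = d n * p n b" by (simp add: xexpf_def)
  have "expf \<mu> b = (\<Sum>k\<le>n. c k * p k b)" using rep by simp
  also have "\<dots> = (\<Sum>k\<le>n. if k = n then c n * p n b else 0)" by (rule sum.cong) (auto simp: pb)
  finally have 2: "expf \<mu> b = c n * p n b" by simp
  have "p n b \<noteq> 0" using p_props(5)[of n] by simp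
  then have "d n = of_real b * c n" using 1 2 by (simp add: algebra_simps)
  then show "node n = b" using c_pos[of n] by (simp add: node_def)
qed

lemma weight_pos: "k \<le> n \<Longrightarrow> weight k > 0"
  using c_pos by (simp add: weight_def)

lemma node_coefficients:
  assumes "k \<le> n"
  shows "of_real (weight k) * expf \<mu> (node k) = c k"
    and "of_real (weight k) * (of_real (node k) * expf \<mu> (node k)) = d k"
proof -
  have "of_real (weight k) * expf \<mu> (node k)
      = of_real (Re (c k) * exp (- (Re \<mu> * node k)) * exp (Re \<mu> * node k))"
    by (simp add: weight_def expf_real[OF mr])
  also have "\<dots> = c k" using c_ofreal[OF assms] by (simp add: exp_minus field_simps)
  finally show c: "of_real (weight k) * expf \<mu> (node k) = c k" .
  show "of_real (weight k) * (of_real (node k) * expf \<mu> (node k)) = d k"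
    using c d_eq[OF assms] by (simp add: algebra_simps)
qed

lemma node_coefficients_unique:
  assumes k: "k \<le> n" and A: "of_real \<alpha> * expf \<mu> t = c k"
    and B: "of_real \<alpha> * (of_real t * expf \<mu> t) = d k"
  shows "t = node k \<and> \<alpha> = weight k"
proof
  have "d k = of_real t * (of_real \<alpha> * expf \<mu> t)" using B by (simp add: mult.left_commute)
  then have "d k = of_real t * c k" by (simp only: A)
  then have "Re (d k) = t * Re (c k)" by simp
  then show t: "t = node k" using c_pos[OF k] by (simp add: node_def)
  have "\<alpha> * exp (Re \<mu> * t) = Re (c k)" using arg_cong[OF A, of Re] by (simp add: expf_real[OF mr])
  then show "\<alpha> = weight k" unfolding weight_def t[symmetric] by (simp add: exp_minus field_simps)
qed

lemma node_conditions:
  "node 0 = a \<and> node n = b \<and> (\<forall>k<n. node k \<le> node (Suc k)) \<and> (\<forall>k\<le>n. 0 < weight k) \<and>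
   (\<forall>k\<le>n. of_real (weight k) * expf \<mu> (node k) = c k
      \<and> of_real (weight k) * (of_real (node k) * expf \<mu> (node k)) = d k)"
proof (intro conjI allI impI)
  show "node 0 = a" "node n = b" by (rule node_ends)+
  show "node k \<le> node (Suc k)" if "k < n" for k using node_strict_mono[OF that] by simp
  show "0 < weight k" if "k \<le> n" for k using weight_pos[OF that] .
  show "of_real (weight k) * expf \<mu> (node k) = c k" if "k \<le> n" for k
    using node_coefficients(1)[OF that] .
  show "of_real (weight k) * (of_real (node k) * expf \<mu> (node k)) = d k" if "k \<le> n" for k
    using node_coefficients(2)[OF that] .
qed

lemma nodes_unique:
  assumes "\<forall>k\<le>n. of_real (\<alpha> k) * expf \<mu> (t k) = c k \<and> of_real (\<alpha> k) * (of_real (t k) * expf \<mu> (t k)) = d k"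
  shows "\<forall>k\<le>n. t k = node k \<and> \<alpha> k = weight k"
proof (intro allI impI)
  fix k assume k: "k \<le> n"
  then show "t k = node k \<and> \<alpha> k = weight k"
    using node_coefficients_unique[OF k, of "\<alpha> k" "t k"] assms by simp
qed

end

text \<open>The operator fixes both functions iff its coefficients in the Bernstein basis are those of
  the expansions of \<open>exp (\<mu> x)\<close> and \<open>x exp (\<mu> x)\<close> (uniqueness of coefficients).\<close>

lemma Bop_bern_list:
  assumes "map lam [0..<Suc n] = L"
  shows "Bop lam n a b t \<alpha> F x = (\<Sum>k\<le>n. (of_real (\<alpha> k) * F (t k)) * bern_list a b L k x)"
  using assms by (simp add: Bop_def bernstein_bern_list)

lemma expansion_iff:
  assumes ab: "a < b" and g: "admissible a b L" and len: "length L = Suc n"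
    and rep: "\<forall>x. f x = (\<Sum>k\<le>n. c k * bern_list a b L k x)"
  shows "(\<forall>x\<in>{a..b}. (\<Sum>k\<le>n. e k * bern_list a b L k x) = f x) \<longleftrightarrow> (\<forall>k\<le>n. e k = c k)"
  using bern_list_coeff_unique[OF ab g len, of e c] rep by (auto intro: sum.cong)

lemma good_nodes_iff_coefficients:
  assumes ab: "a < b" and g: "admissible a b L" and L: "map lam [0..<Suc n] = L" and \<mu>: "lam 0 = \<mu>"
    and repc: "\<forall>x. expf \<mu> x = (\<Sum>k\<le>n. c k * bern_list a b L k x)"
    and repd: "\<forall>x. xexpf \<mu> x = (\<Sum>k\<le>n. d k * bern_list a b L k x)"
  shows "good_nodes lam n a b t \<alpha> \<longleftrightarrow> t 0 = a \<and> t n = b \<and> (\<forall>k<n. t k \<le> t (Suc k)) \<and> (\<forall>k\<le>n. 0 < \<alpha> k) \<and>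
      (\<forall>k\<le>n. of_real (\<alpha> k) * expf \<mu> (t k) = c k \<and> of_real (\<alpha> k) * (of_real (t k) * expf \<mu> (t k)) = d k)"
proof -
  have len: "length L = Suc n" using L by auto
  have E1: "(\<forall>x\<in>{a..b}. Bop lam n a b t \<alpha> (\<lambda>y. exp (lam 0 * complex_of_real y)) x
        = exp (lam 0 * complex_of_real x))
      \<longleftrightarrow> (\<forall>k\<le>n. of_real (\<alpha> k) * expf \<mu> (t k) = c k)"
    unfolding Bop_bern_list[OF L]
    using expansion_iff[OF ab g len repc, of "\<lambda>k. of_real (\<alpha> k) * expf \<mu> (t k)"]
    by (simp add: expf_def \<mu>)
  have E2: "(\<forall>x\<in>{a..b}. Bop lam n a b t \<alpha> (\<lambda>y. complex_of_real y * exp (lam 0 * complex_of_real y)) x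
        = complex_of_real x * exp (lam 0 * complex_of_real x))
      \<longleftrightarrow> (\<forall>k\<le>n. of_real (\<alpha> k) * (of_real (t k) * expf \<mu> (t k)) = d k)"
    unfolding Bop_bern_list[OF L]
    using expansion_iff[OF ab g len repd, of "\<lambda>k. of_real (\<alpha> k) * (of_real (t k) * expf \<mu> (t k))"]
    by (simp add: xexpf_def expf_def \<mu> mult.assoc)
  show ?thesis unfolding good_nodes_def E1 E2 by blast
qed

lemma double_root_split:
  assumes "n \<ge> 1" "lam 0 = lam 1"
  shows "map lam [0..<Suc n] = lam 0 # lam 0 # map lam [2..<Suc n]"
proof -
  have u1: "[0..<Suc n] = 0 # [Suc 0..<Suc n]" by (rule upt_conv_Cons) simp
  have u2: "[Suc 0..<Suc n] = Suc 0 # [2..<Suc n]"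
    using assms(1) upt_conv_Cons[of "Suc 0" "Suc n"] by (simp add: numeral_2_eq_2)
  show ?thesis unfolding u1 u2 using assms(2) by simp
qed

lemma admissible_roots:
  assumes cc: "closed_cnj (ESpace lam n)" and ab: "0 < b - a" and M: "Mn lam n = 0 \<or> b - a < pi / Mn lam n"
  shows "admissible a b (map lam [0..<Suc n])"
proof -
  have "finite {\<bar>Im (lam j)\<bar> |j. j \<le> n}"
    using finite_image_set[of "\<lambda>j. j \<le> n" "\<lambda>j. \<bar>Im (lam j)\<bar>"] by simp
  then have le: "\<bar>Im (lam j)\<bar> \<le> Mn lam n" if "j \<le> n" for j
    unfolding Mn_def by (rule Max_ge) (use that in auto)
  have "\<bar>Im (lam j)\<bar> * (b - a) < pi" if "j \<le> n" for j
  proof (cases "Mn lam n = 0")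
    case True then show ?thesis using le[OF that] by simp
  next
    case False
    then have "0 < Mn lam n" using le[of 0] by linarith
    moreover have "b - a < pi / Mn lam n" using M False by simp
    ultimately have "Mn lam n * (b - a) < pi" by (simp add: pos_less_divide_eq mult.commute)
    moreover have "\<bar>Im (lam j)\<bar> * (b - a) \<le> Mn lam n * (b - a)" using le[OF that] ab by simp
    ultimately show ?thesis by simp
  qed
  then show ?thesis using cc
    by (auto simp: admissible_def closed_cnj_def cnj_closed_def ESpace_Esol less_Suc_eq_le)
qed

theorem mainTheorem16:
  fixes lam :: "nat \<Rightarrow> complex" and n :: nat and a b :: real
  assumes "n \<ge> 1"
    and "lam 0 = lam 1" and "Im (lam 0) = 0"
    and "closed_cnj (ESpace lam n)"
    and "0 < b - a"
    and "Mn lam n = 0 \<or> b - a < pi / Mn lam n"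
  shows "\<exists>t \<alpha>. good_nodes lam n a b t \<alpha> \<and>
           (\<forall>t' \<alpha>'. good_nodes lam n a b t' \<alpha>' \<longrightarrow> (\<forall>k\<le>n. t' k = t k \<and> \<alpha>' k = \<alpha> k))"
proof -
  define \<mu> where "\<mu> = lam 0"
  define L'' where "L'' = map lam [2..<Suc n]"
  have L: "map lam [0..<Suc n] = \<mu> # \<mu> # L''"
    unfolding \<mu>_def L''_def by (rule double_root_split[OF assms(1,2)])
  have n: "n = Suc (length L'')" using assms(1) by (simp add: L''_def) arith
  have ab: "a < b" and adm: "admissible a b (\<mu> # \<mu> # L'')"
    using assms(5) admissible_roots[OF assms(4-6)] L by auto
  obtain c where c: "\<forall>x. expf \<mu> x = (\<Sum>k\<le>n. c k * bern_list a b (\<mu> # \<mu> # L'') k x)"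
    using bern_list_expansion[OF ab adm expf_in_Esol[of \<mu>]] n by auto
  obtain d where d: "\<forall>x. xexpf \<mu> x = (\<Sum>k\<le>n. d k * bern_list a b (\<mu> # \<mu> # L'') k x)"
    using bern_list_expansion[OF ab adm xexpf_in_Esol[OF refl]] n by auto
  interpret N: node_data a b \<mu> L'' c d
    using ab adm assms(3) c d n by unfold_locales (auto simp: \<mu>_def)
  have nN: "n = N.n" using n by simp
  note iff = good_nodes_iff_coefficients[OF ab adm L \<mu>_def[symmetric] c d]
  have "good_nodes lam n a b N.node N.weight"
    unfolding iff using N.node_conditions unfolding nN[symmetric] .
  moreover have "\<forall>k\<le>n. t' k = N.node k \<and> \<alpha>' k = N.weight k" if "good_nodes lam n a b t' \<alpha>'" for t' \<alpha>'
  proof -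
    have "\<forall>k\<le>n. of_real (\<alpha>' k) * expf \<mu> (t' k) = c k
        \<and> of_real (\<alpha>' k) * (of_real (t' k) * expf \<mu> (t' k)) = d k" using that unfolding iff by blast
    then show ?thesis by (rule N.nodes_unique[of \<alpha>' t', unfolded nN[symmetric]])
  qed
  ultimately show ?thesis by blast
qed

end
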